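(* Let $\mathcal P\subset\mathbb R^n$ be an $n$-dimensional convex polytope and consider $\dot x=Ax+a+Bu$, $x\in\mathcal P$, with $A\in\mathbb R^{n\times n}$, $a\in\mathbb R^n$, $B\in\mathbb R^{n\times m}$, under assumptions (A1) $\operatorname{rank}(B)=n-1$; (A2) $(A,B)$ controllable; (A3) $\operatorname{int}\mathcal P\cap\mathcal O=\emptyset$; (A4) $\mathcal F$ is an $(n-1)$-dimensional polytope contained in the boundary of $\mathcal P$. Define $\mathcal A^-=\mathcal H^-\setminus(\mathcal F\cup\mathcal B^-)$, and $\mathcal A^+=\mathcal P^+$ if $\mathcal P^+\subset\mathcal O\cap\{x\in\mathcal P:\beta^Tx>\beta^Tv^+\}$, $\mathcal A^+=\emptyset$ otherwise; let $\mathcal A=\mathcal A^-\cup\mathcal A^+$. Then $\mathrm{Reach}(\mathcal P,\mathcal F)=\mathcal P\setminus\mathcal A$. Moreover, $\mathrm{Reach}(\mathcal P,\mathcal F)\xrightarrow{\mathrm{Reach}(\mathcal P,\mathcal F)}\mathcal F$, and no point of $\mathcal A$ can reach $\mathcal F$ with constraint in $\mathcal P$.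
   Context: Controls are piecewise continuous functions $t\mapsto u(t)\in\mathbb R^m$; $\phi^u_t(x_0)$ is the solution from $x_0$. For closed sets $\Omega,\Omega_f$ and $x\in\Omega$, $x\xrightarrow{\Omega}\Omega_f$ ("$x$ can reach $\Omega_f$ with constraint in $\Omega$") means there exist a piecewise continuous control $u$ and $T\ge0$ with $\phi^u_T(x)\in\Omega_f$ and $\phi^u_t(x)\in\Omega$ for all $t\in[0,T]$; for $\Omega'\subseteq\Omega$, $\Omega'\xrightarrow{\Omega}\Omega_f$ means this holds for every $x\in\Omega'$. $\mathrm{Reach}(\mathcal P,\mathcal F)$ is the set of all $x\in\mathcal P$ with $x\xrightarrow{\mathcal P}\mathcal F$. $\mathcal B=\operatorname{Im}(B)$, $\mathcal O=\{x:Ax+a\in\mathcal B\}$; $\beta$ is the unit normal to $\mathcal B$ with $\beta^T(Ax+a)\le0$ for all $x\in\mathcal P$; $\mathcal B_z=\{x:\beta^Tx=\beta^Tz\}$. $v^-\in\arg\min\{\beta^Tx:x\in\mathcal F\}$, $v^+\in\arg\max\{\beta^Tx:x\in\mathcal F\}$, $\mathcal H^-=\{x\in\mathcal P:\beta^Tx\le\beta^Tv^-\}$, $\mathcal P^+=\arg\max\{\beta^Tx:x\in\mathcal P\}$, and $\mathcal B^-=\mathcal B_{v^-}\cap\mathcal O$ if $\mathcal B_{v^-}\cap\mathcal O\cap\mathcal F\ne\emptyset$, $\mathcal B^-=\emptyset$ otherwise. *)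

theory Defs
  imports "HOL-Analysis.Analysis"
begin

text \<open>Piecewise continuity of a control on [0,T]: there is a finite strictly increasing
  list of break points 0 = t_0 < ... < t_k = T such that on each open piece u coincides
  with a function continuous on the closed piece (so one-sided limits exist).\<close>
definition piecewise_continuous_on :: "real \<Rightarrow> (real \<Rightarrow> 'b::topological_space) \<Rightarrow> bool" where
  "piecewise_continuous_on T u \<longleftrightarrow>
     (\<exists>ts::real list. ts \<noteq> [] \<and> sorted_wrt (<) ts \<and> hd ts = 0 \<and> last ts = T \<and>
        (\<forall>i < length ts - 1. \<exists>g. continuous_on {ts ! i .. ts ! Suc i} g \<and>
             (\<forall>s \<in> {ts ! i <..< ts ! Suc i}. u s = g s)))"

definition is_solution ::
  "real^'n^'n \<Rightarrow> real^'n \<Rightarrow> real^'m^'n \<Rightarrow> (real \<Rightarrow> real^'m) \<Rightarrow> real^'n \<Rightarrow> real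
    \<Rightarrow> (real \<Rightarrow> real^'n) \<Rightarrow> bool" where
  "is_solution A a B u x0 T x \<longleftrightarrow>
     continuous_on {0..T} x \<and>
     (\<forall>t \<in> {0..T}. x t = x0 + integral {0..t} (\<lambda>s. A *v x s + a + B *v u s))"

definition reaches ::
  "real^'n^'n \<Rightarrow> real^'n \<Rightarrow> real^'m^'n \<Rightarrow> (real^'n) set \<Rightarrow> real^'n \<Rightarrow> (real^'n) set \<Rightarrow> bool" where
  "reaches A a B Om x0 Omf \<longleftrightarrow>
     (\<exists>(u::real \<Rightarrow> real^'m) T xt. T \<ge> 0 \<and> piecewise_continuous_on T u \<and>
        is_solution A a B u x0 T xt \<and> xt T \<in> Omf \<and> (\<forall>t \<in> {0..T}. xt t \<in> Om))"

definition Reach ::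
  "real^'n^'n \<Rightarrow> real^'n \<Rightarrow> real^'m^'n \<Rightarrow> (real^'n) set \<Rightarrow> (real^'n) set \<Rightarrow> (real^'n) set" where
  "Reach A a B P F = {x \<in> P. reaches A a B P x F}"

definition controllable :: "real^'n^'n \<Rightarrow> real^'m^'n \<Rightarrow> bool" where
  "controllable A B \<longleftrightarrow>
     span (\<Union>k < CARD('n). range (\<lambda>v. ((\<lambda>y. A *v y) ^^ k) (B *v v))) = UNIV"

end

theory Submission
  imports Defs
begin

text \<open>Since \<open>B\<close> has rank \<open>n - 1\<close> and is orthogonal to \<open>\<beta>\<close>, the input can prescribe every velocity component
  except the one along \<open>\<beta>\<close>, and along every trajectory the level \<open>\<beta> \<bullet> x\<close> moves with speed
  \<open>drift x = \<beta> \<bullet> (A x + a)\<close>, which is \<open>\<le> 0\<close> on \<open>P\<close>. Hence levels never increase inside \<open>P\<close>: a point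
  strictly below the lowest level of \<open>F\<close> can never reach it, and a point on the lowest level can only
  stay there, which forces both it and the endpoint into the equilibrium set \<open>\<O> = {drift = 0}\<close>. On the
  top face of \<open>P\<close>, if it consists of equilibria, the drift vanishes to first order in the depth
  below the top, so by a Gronwall estimate trajectories starting there never leave it.

  Conversely, controllability yields a vector \<open>e\<close> tangent to the level sets along which the drift
  grows at unit rate. Quadratic Bezier arcs \<open>p \<rightarrow> q\<close> whose control point \<open>r\<close> has the right level and
  drift are trajectories; moving \<open>r\<close> along \<open>e\<close> corrects its drift, which is possible whenever
  \<open>P\<close> contains a ball around the natural control point. Chaining such arcs through a tube in the
  interior of \<open>P\<close> connects any point to any lower point, provided neither lies on a level
  consisting only of equilibria; the remaining cases are handled within a single level.\<close>

lemma sorted_wrt_less_hd_last: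
  fixes xs :: "real list"
  shows "sorted_wrt (<) xs \<Longrightarrow> x \<in> set xs \<Longrightarrow> hd xs \<le> x \<and> x \<le> last xs"
proof (induction xs)
  case (Cons b xs)
  show ?case
  proof (cases "xs = []")
    case False
    have h: "\<forall>y\<in>set xs. b < y" "sorted_wrt (<) xs" using Cons.prems by auto
    moreover have "last xs \<in> set xs" using False by simp
    ultimately show ?thesis using Cons.prems(2) Cons.IH[OF h(2)] False by fastforce
  qed (use Cons in simp)
qed simp

lemma piecewise_continuous_integrable:
  fixes u :: "real \<Rightarrow> 'b::euclidean_space"
  assumes "piecewise_continuous_on T u"
  shows "u integrable_on {0..T}"
proof -
  obtain ts where ts: "ts \<noteq> []" "sorted_wrt (<) ts" "hd ts = 0" "last ts = T"
    and pieces: "\<And>i. i < length ts - 1 \<Longrightarrow> \<exists>g. continuous_on {ts ! i .. ts ! Suc i} g \<and>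
             (\<forall>s \<in> {ts ! i <..< ts ! Suc i}. u s = g s)"
    using assms unfolding piecewise_continuous_on_def by blast
  have "u integrable_on {ts ! 0 .. ts ! k}" if "k < length ts" for k
    using that
  proof (induction k)
    case 0
    then show ?case using integrable_on_refl[of u "ts ! 0"] by simp
  next
    case (Suc k)
    obtain g where g: "continuous_on {ts ! k .. ts ! Suc k} g"
      "\<forall>s \<in> {ts ! k <..< ts ! Suc k}. u s = g s"
      using pieces[of k] Suc.prems by (metis Suc_lessE diff_Suc_1)
    have "u integrable_on {ts ! k .. ts ! Suc k}"
      using integrable_spike_finite[of "{ts ! k, ts ! Suc k}" "{ts ! k .. ts ! Suc k}" u g] integrable_continuous_real[OF g(1)] g(2)
      by auto
    moreover have "ts ! 0 \<le> ts ! k"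
      using sorted_wrt_nth_less[OF ts(2), of 0 k] Suc.prems by (cases k) auto
    moreover have "ts ! k \<le> ts ! Suc k"
      using sorted_wrt_nth_less[OF ts(2), of k "Suc k"] Suc.prems by auto
    ultimately show ?case
      using Suc Henstock_Kurzweil_Integration.integrable_combine[where a = "ts ! 0" and c = "ts ! k" and b = "ts ! Suc k" and f = u] by simp
  qed
  from this[of "length ts - 1"] ts show ?thesis
    by (simp add: hd_conv_nth last_conv_nth)
qed

lemma solution_rhs_integrable:
  fixes u :: "real \<Rightarrow> real^'m" and x :: "real \<Rightarrow> real^'n"
  assumes "piecewise_continuous_on T u" "continuous_on {0..T} x" "0 \<le> t" "t \<le> T"
  shows "(\<lambda>s. A *v x s + a + B *v u s) integrable_on {0..t}"
proof -
  have "u integrable_on {0..t}"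
    using piecewise_continuous_integrable[OF assms(1)] assms(3,4) integrable_subinterval_real
    by fastforce
  then have "(\<lambda>s. B *v u s) integrable_on {0..t}"
    using integrable_linear[of u _ "\<lambda>v. B *v v"] by (simp add: o_def)
  moreover have "continuous_on {0..t} (\<lambda>s. A *v x s + a)"
    using continuous_on_subset[OF assms(2)] assms(4)
    by (intro continuous_intros bounded_linear.continuous_on[OF matrix_vector_mul_bounded_linear]) auto
  ultimately show ?thesis
    using integrable_add integrable_continuous_real by blast
qed

lemma break_points_append:
  fixes ts1 ts2 :: "real list"
  assumes ts1: "ts1 \<noteq> []" "sorted_wrt (<) ts1" "hd ts1 = 0" "last ts1 = T1"
    and ts2: "ts2 \<noteq> []" "sorted_wrt (<) ts2" "hd ts2 = 0" "last ts2 = T2"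
  defines "ts \<equiv> ts1 @ map (\<lambda>t. t + T1) (tl ts2)"
  shows "sorted_wrt (<) ts" "hd ts = 0" "last ts = T1 + T2"
    and "\<And>i. i < length ts1 \<Longrightarrow> ts ! i = ts1 ! i"
    and "\<And>i. length ts1 - 1 \<le> i \<Longrightarrow> i < length ts \<Longrightarrow> ts ! i = ts2 ! (i - (length ts1 - 1)) + T1"
proof -
  have le1: "x \<le> T1" if "x \<in> set ts1" for x
    using sorted_wrt_less_hd_last[OF ts1(2) that] ts1 by simp
  have gt2: "y > 0" if "y \<in> set (tl ts2)" for y
    using ts2 that by (cases ts2) auto
  show "sorted_wrt (<) ts"
    unfolding ts_def sorted_wrt_append sorted_wrt_map
  proof (intro conjI ballI)
    show "sorted_wrt (\<lambda>x y. x + T1 < y + T1) (tl ts2)"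
      using ts2(2) by (cases ts2) (auto elim: sorted_wrt_mono_rel[rotated])
    fix x y assume "x \<in> set ts1" "y \<in> set (map (\<lambda>t. t + T1) (tl ts2))"
    then show "x < y" using le1 gt2 by force
  qed (rule ts1(2))
  show "hd ts = 0" using ts1 by (simp add: ts_def)
  show "last ts = T1 + T2"
  proof (cases "tl ts2 = []")
    case True
    then have "ts2 = [hd ts2]" using ts2(1) by (cases ts2) auto
    then have "T2 = 0" using ts2 by (metis last_ConsL)
    then show ?thesis using True ts1 by (simp add: ts_def)
  next
    case False
    then have "last (tl ts2) = last ts2" by (cases ts2) auto
    then show ?thesis using False ts2 by (simp add: ts_def last_map)
  qed
  show nth1: "ts ! i = ts1 ! i" if "i < length ts1" for i
    using that by (simp add: ts_def nth_append)
  fix i assume i: "length ts1 - 1 \<le> i" "i < length ts"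
  show "ts ! i = ts2 ! (i - (length ts1 - 1)) + T1"
  proof (cases "i = length ts1 - 1")
    case True
    then have "ts ! i = last ts1" using nth1 ts1(1) by (simp add: last_conv_nth)
    then show ?thesis using True ts1 ts2 by (simp add: hd_conv_nth)
  next
    case False
    then have i1: "length ts1 \<le> i" using i by simp
    then have "i - (length ts1 - 1) = Suc (i - length ts1)" using ts1(1) by (cases ts1) auto
    then show ?thesis using i i1 by (cases ts2) (simp_all add: ts_def nth_append)
  qed
qed

lemma piecewise_continuous_on_append:
  assumes "piecewise_continuous_on T1 u1" "piecewise_continuous_on T2 u2"
  shows "piecewise_continuous_on (T1 + T2) (\<lambda>t. if t \<le> T1 then u1 t else u2 (t - T1))"
proof -
  obtain ts1 where ts1: "ts1 \<noteq> []" "sorted_wrt (<) ts1" "hd ts1 = 0" "last ts1 = T1"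
    and p1: "\<And>i. i < length ts1 - 1 \<Longrightarrow> \<exists>g. continuous_on {ts1 ! i .. ts1 ! Suc i} g \<and>
             (\<forall>s \<in> {ts1 ! i <..< ts1 ! Suc i}. u1 s = g s)"
    using assms(1) unfolding piecewise_continuous_on_def by blast
  obtain ts2 where ts2: "ts2 \<noteq> []" "sorted_wrt (<) ts2" "hd ts2 = 0" "last ts2 = T2"
    and p2: "\<And>i. i < length ts2 - 1 \<Longrightarrow> \<exists>g. continuous_on {ts2 ! i .. ts2 ! Suc i} g \<and>
             (\<forall>s \<in> {ts2 ! i <..< ts2 ! Suc i}. u2 s = g s)"
    using assms(2) unfolding piecewise_continuous_on_def by blast
  define ts where "ts = ts1 @ map (\<lambda>t. t + T1) (tl ts2)"
  note ts = break_points_append[OF ts1 ts2, folded ts_def]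
  have len: "length ts = length ts1 + length ts2 - 1" using ts2(1) by (cases ts2) (simp_all add: ts_def)
  have pieces: "\<exists>g. continuous_on {ts ! i .. ts ! Suc i} g \<and>
          (\<forall>s \<in> {ts ! i <..< ts ! Suc i}. (if s \<le> T1 then u1 s else u2 (s - T1)) = g s)"
    if i: "i < length ts - 1" for i
  proof (cases "Suc i < length ts1")
    case True
    obtain g where g: "continuous_on {ts1 ! i .. ts1 ! Suc i} g"
      "\<forall>s \<in> {ts1 ! i <..< ts1 ! Suc i}. u1 s = g s" using p1[of i] True by (metis Suc_lessE diff_Suc_1)
    have "ts1 ! Suc i \<in> set ts1" using True by simp
    then have "ts1 ! Suc i \<le> T1" using sorted_wrt_less_hd_last[OF ts1(2)] ts1(4) by simp
    then show ?thesis using g True ts(4)[of i] ts(4)[of "Suc i"]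
      by (intro exI[of _ g]) auto
  next
    case False
    define j where "j = i - (length ts1 - 1)"
    have j: "j < length ts2 - 1" "Suc i - (length ts1 - 1) = Suc j"
      using False i len ts1(1) by (auto simp: j_def)
    obtain g where g: "continuous_on {ts2 ! j .. ts2 ! Suc j} g"
      "\<forall>s \<in> {ts2 ! j <..< ts2 ! Suc j}. u2 s = g s" using p2 j by blast
    have e1: "ts ! i = ts2 ! j + T1" and e2: "ts ! Suc i = ts2 ! Suc j + T1"
      using ts(5)[of i] ts(5)[of "Suc i"] False i j by (auto simp: j_def)
    have c: "continuous_on {ts2 ! j + T1 .. ts2 ! Suc j + T1} (\<lambda>s. g (s - T1))"
      by (rule continuous_on_compose2[OF g(1)]) (auto intro!: continuous_intros)
    have "ts2 ! j \<in> set ts2" using j by simp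
    then have "ts2 ! j \<ge> 0" using sorted_wrt_less_hd_last[OF ts2(2)] ts2(3) by simp
    then show ?thesis unfolding e1 e2 using c g(2)
      by (intro exI[of _ "\<lambda>s. g (s - T1)"]) auto
  qed
  have "ts \<noteq> []" using ts1(1) by (simp add: ts_def)
  then show ?thesis unfolding piecewise_continuous_on_def
    by (intro exI[of _ ts] conjI ts(1-3) allI impI pieces)
qed

lemma is_solution_append:
  fixes u1 u2 :: "real \<Rightarrow> real^'m"
  assumes T: "T1 \<ge> 0" "T2 \<ge> 0"
    and pc1: "piecewise_continuous_on T1 u1" and s1: "is_solution A a B u1 x T1 X1" and y: "X1 T1 = y"
    and pc2: "piecewise_continuous_on T2 u2" and s2: "is_solution A a B u2 y T2 X2"
  shows "is_solution A a B (\<lambda>t. if t \<le> T1 then u1 t else u2 (t - T1)) x (T1 + T2)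
           (\<lambda>t. if t \<le> T1 then X1 t else X2 (t - T1))"
proof -
  define U where "U t = (if t \<le> T1 then u1 t else u2 (t - T1))" for t
  define X where "X t = (if t \<le> T1 then X1 t else X2 (t - T1))" for t
  define f1 where "f1 s = A *v X1 s + a + B *v u1 s" for s
  define f2 where "f2 s = A *v X2 s + a + B *v u2 s" for s
  define f where "f s = A *v X s + a + B *v U s" for s
  have c1: "continuous_on {0..T1} X1" and i1: "\<forall>t\<in>{0..T1}. X1 t = x + integral {0..t} f1"
    using s1 unfolding is_solution_def f1_def by auto
  have c2: "continuous_on {0..T2} X2" and i2: "\<forall>t\<in>{0..T2}. X2 t = y + integral {0..t} f2"
    using s2 unfolding is_solution_def f2_def by auto
  have X20: "X2 0 = y" using i2 T by auto
  have "continuous_on {0..T1+T2} X"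
  proof -
    have "continuous_on {t \<in> {0..T1+T2}. t \<le> T1} X1"
      by (rule continuous_on_subset[OF c1]) auto
    moreover have "continuous_on {t \<in> {0..T1+T2}. T1 \<le> t} (\<lambda>t. X2 (t - T1))"
      by (rule continuous_on_compose2[OF c2]) (auto intro!: continuous_intros)
    ultimately show ?thesis unfolding X_def
      by (rule continuous_on_cases_le) (auto intro!: continuous_intros simp: X20 y)
  qed
  moreover have "X t = x + integral {0..t} f" if t: "t \<in> {0..T1+T2}" for t
  proof (cases "t \<le> T1")
    case True
    have "integral {0..t} f = integral {0..t} f1"
      by (rule integral_cong) (use True in \<open>simp add: f_def f1_def X_def U_def\<close>)
    then show ?thesis using True t i1 by (simp add: X_def)
  next
    case False
    have ff1: "f s = f1 s" if "s \<le> T1" for s using that by (simp add: f_def f1_def X_def U_def)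
    have ff2: "f (T1 + s) = f2 s" if "s > 0" for s using that by (simp add: f_def f2_def X_def U_def)
    have "f1 integrable_on {0..T1}"
      unfolding f1_def by (rule solution_rhs_integrable[OF pc1 c1]) (use T in auto)
    then have fA: "f integrable_on {0..T1}"
      by (rule integrable_spike_finite[of "{}", rotated 2]) (use ff1 in auto)
    have "f2 integrable_on {0..t-T1}"
      unfolding f2_def by (rule solution_rhs_integrable[OF pc2 c2]) (use False t in auto)
    then have "(f \<circ> (+) T1) integrable_on {0..t-T1}"
      by (rule integrable_spike_finite[of "{0}", rotated 2]) (use ff2 in auto)
    then have fB: "f integrable_on {T1..t}"
      using integrable_on_shift_cbox[of f T1 0 "t-T1"] by simp
    have "integral {0..T1} f = integral {0..T1} f1"
      by (rule integral_cong) (use ff1 in auto)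
    also have "\<dots> = y - x" using i1 y T by force
    finally have IA: "integral {0..T1} f = y - x" .
    have "integral {T1..t} f = integral {0..t-T1} (f \<circ> (+) T1)"
      using integral_shift_Icc_real[of 0 "t-T1" f T1] by simp
    also have "\<dots> = integral {0..t-T1} f2"
      by (rule integral_spike[of "{0}"]) (use ff2 in \<open>auto simp: o_def\<close>)
    also have "\<dots> = X2 (t - T1) - y" using i2 t False by force
    finally have IB: "integral {T1..t} f = X2 (t - T1) - y" .
    have "integral {0..t} f = integral {0..T1} f + integral {T1..t} f"
      using Henstock_Kurzweil_Integration.integral_combine[of 0 T1 t f]
        Henstock_Kurzweil_Integration.integrable_combine[of 0 T1 t f] fA fB T False by simp
    then show ?thesis using False IA IB by (simp add: X_def)
  qed
  ultimately have "is_solution A a B U x (T1 + T2) X"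
    unfolding is_solution_def f_def by blast
  then show ?thesis unfolding U_def X_def .
qed

lemma is_solution_of_has_vector_derivative:
  assumes "X 0 = x0"
    and "\<And>t. t \<in> {0..T} \<Longrightarrow> (X has_vector_derivative (A *v X t + a + B *v u t)) (at t within {0..T})"
  shows "is_solution A a B u x0 T X"
  unfolding is_solution_def
proof
  show "continuous_on {0..T} X" by (rule continuous_on_vector_derivative) (use assms(2) in blast)
  show "\<forall>t\<in>{0..T}. X t = x0 + integral {0..t} (\<lambda>s. A *v X s + a + B *v u s)"
  proof
    fix t assume t: "t \<in> {0..T}"
    have "((\<lambda>s. A *v X s + a + B *v u s) has_integral (X t - X 0)) {0..t}"
      by (rule fundamental_theorem_of_calculus)
        (use t in \<open>auto intro: has_vector_derivative_within_subset[OF assms(2)]\<close>)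
    then show "X t = x0 + integral {0..t} (\<lambda>s. A *v X s + a + B *v u s)"
      using assms(1) by (simp add: integral_unique)
  qed
qed

lemma reaches_refl:
  assumes "x \<in> P" "x \<in> F"
  shows "reaches A a B P x F"
proof -
  have "piecewise_continuous_on 0 (\<lambda>t. 0::real^'m)"
    unfolding piecewise_continuous_on_def by (intro exI[of _ "[0]"]) auto
  moreover have "is_solution A a B (\<lambda>t. 0) x 0 (\<lambda>t. x)"
    unfolding is_solution_def by auto
  ultimately show ?thesis unfolding reaches_def using assms
    by (intro exI[of _ "\<lambda>t. 0"] exI[of _ "0::real"] exI[of _ "\<lambda>t. x"]) auto
qed

lemma reaches_trans:
  fixes A :: "real^'n^'n" and B :: "real^'m^'n"
  assumes "reaches A a B P x {y}" and "reaches A a B P y F"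
  shows "reaches A a B P x F"
proof -
  obtain u1 T1 X1 where T1: "T1 \<ge> 0" and pc1: "piecewise_continuous_on T1 u1"
    and s1: "is_solution A a B u1 x T1 X1" and y: "X1 T1 = y" and in1: "\<forall>t\<in>{0..T1}. X1 t \<in> P"
    using assms(1) unfolding reaches_def by blast
  obtain u2 T2 X2 where T2: "T2 \<ge> 0" and pc2: "piecewise_continuous_on T2 u2"
    and s2: "is_solution A a B u2 y T2 X2" and F: "X2 T2 \<in> F" and in2: "\<forall>t\<in>{0..T2}. X2 t \<in> P"
    using assms(2) unfolding reaches_def by blast
  have "X2 0 = y" using s2 T2 unfolding is_solution_def by auto
  show ?thesis unfolding reaches_def
  proof (intro exI conjI)
    show "0 \<le> T1 + T2" using T1 T2 by simp
    show "piecewise_continuous_on (T1 + T2) (\<lambda>t. if t \<le> T1 then u1 t else u2 (t - T1))"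
      by (rule piecewise_continuous_on_append[OF pc1 pc2])
    show "is_solution A a B (\<lambda>t. if t \<le> T1 then u1 t else u2 (t - T1)) x (T1 + T2)
            (\<lambda>t. if t \<le> T1 then X1 t else X2 (t - T1))"
      by (rule is_solution_append[OF T1 T2 pc1 s1 y pc2 s2])
    show "(if T1 + T2 \<le> T1 then X1 (T1 + T2) else X2 (T1 + T2 - T1)) \<in> F"
      using F y T2 \<open>X2 0 = y\<close> by (cases "T2 = 0") auto
    show "\<forall>t\<in>{0..T1 + T2}. (if t \<le> T1 then X1 t else X2 (t - T1)) \<in> P"
      using in1 in2 by auto
  qed
qed

lemma quad_bezier_mem_convex_hull:
  fixes p r q :: "'a::real_vector"
  assumes "0 \<le> s" "s \<le> 1"
  shows "p + (2 * s) *\<^sub>R (r - p) + s\<^sup>2 *\<^sub>R (p - 2 *\<^sub>R r + q) \<in> convex hull {p, r, q}"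
proof -
  have "p + (2 * s) *\<^sub>R (r - p) + s\<^sup>2 *\<^sub>R (p - 2 *\<^sub>R r + q)
      = (1 - s)\<^sup>2 *\<^sub>R p + (2 * s * (1 - s)) *\<^sub>R r + s\<^sup>2 *\<^sub>R q"
    by (simp add: algebra_simps power2_eq_square)
  also have "\<dots> \<in> convex hull {p, r, q}"
    unfolding convex_hull_3
    by (rule CollectI, rule exI[of _ "(1 - s)\<^sup>2"], rule exI[of _ "2 * s * (1 - s)"], rule exI[of _ "s\<^sup>2"])
      (use assms mult_left_le_one_le[of s s] mult_nonneg_nonneg[of "1 - s" "1 - s"] in \<open>auto simp: algebra_simps power2_eq_square\<close>)
  finally show ?thesis .
qed

lemma convex_ball_towards:
  fixes S :: "'a::real_normed_vector set"
  assumes "convex S" "y \<in> S" "ball c \<rho> \<subseteq> S" "0 \<le> \<kappa>" "\<kappa> \<le> 1"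
  shows "ball ((1 - \<kappa>) *\<^sub>R y + \<kappa> *\<^sub>R c) (\<kappa> * \<rho>) \<subseteq> S"
proof
  fix z assume z: "z \<in> ball ((1 - \<kappa>) *\<^sub>R y + \<kappa> *\<^sub>R c) (\<kappa> * \<rho>)"
  define w where "w = (1 - \<kappa>) *\<^sub>R y + \<kappa> *\<^sub>R c"
  have \<kappa>: "\<kappa> > 0" using z assms(4) by (cases "\<kappa> = 0") auto
  have "dist c (c + (1 / \<kappa>) *\<^sub>R (z - w)) = norm (z - w) / \<kappa>" using \<kappa> by (simp add: dist_norm)
  also have "\<dots> < \<rho>"
    using z \<kappa> by (simp add: w_def dist_norm norm_minus_commute pos_divide_less_eq mult.commute)
  finally have "c + (1 / \<kappa>) *\<^sub>R (z - w) \<in> S" using assms(3) by auto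
  then have "(1 - \<kappa>) *\<^sub>R y + \<kappa> *\<^sub>R (c + (1 / \<kappa>) *\<^sub>R (z - w)) \<in> S"
    using assms by (intro convexD) auto
  also have "(1 - \<kappa>) *\<^sub>R y + \<kappa> *\<^sub>R (c + (1 / \<kappa>) *\<^sub>R (z - w)) = z"
    using \<kappa> by (simp add: w_def algebra_simps)
  finally show "z \<in> S" .
qed

lemma convex_ball_segment:
  fixes S :: "'a::real_normed_vector set"
  assumes "convex S" "ball u \<rho> \<subseteq> S" "ball v \<rho> \<subseteq> S" "0 \<le> s" "s \<le> 1"
  shows "ball ((1 - s) *\<^sub>R u + s *\<^sub>R v) \<rho> \<subseteq> S"
proof
  fix z assume z: "z \<in> ball ((1 - s) *\<^sub>R u + s *\<^sub>R v) \<rho>"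
  define d where "d = z - ((1 - s) *\<^sub>R u + s *\<^sub>R v)"
  have "u + d \<in> S" "v + d \<in> S" using z assms(2,3) by (auto simp: d_def dist_norm norm_minus_commute)
  then have "(1 - s) *\<^sub>R (u + d) + s *\<^sub>R (v + d) \<in> S" using assms by (intro convexD) auto
  also have "(1 - s) *\<^sub>R (u + d) + s *\<^sub>R (v + d) = z" by (simp add: d_def algebra_simps)
  finally show "z \<in> S" .
qed

lemma eventually_at_right_0_mult_less:
  fixes K M :: real
  assumes "M > 0"
  shows "\<forall>\<^sub>F l in at_right 0. l * K < M"
proof -
  have "((\<lambda>l. l * K) \<longlongrightarrow> 0) (at_right 0)" by (auto intro!: tendsto_eq_intros)
  then show ?thesis using assms by (rule order_tendstoD(2))
qed

section \<open>Evolution of the level along trajectories\<close>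

locale beta_normal_system =
  fixes A :: "real^'n^'n" and a :: "real^'n" and B :: "real^'m^'n" and \<beta> :: "real^'n"
  assumes beta_orthogonal_B: "\<And>u. \<beta> \<bullet> (B *v u) = 0"
begin

definition drift :: "real^'n \<Rightarrow> real" where "drift x = \<beta> \<bullet> (A *v x + a)"

lemma drift_affine_comb: "drift ((1 - (t::real)) *\<^sub>R p + t *\<^sub>R q) = (1 - t) * drift p + t * drift q"
  unfolding drift_def by (simp add: algebra_simps inner_add_right inner_diff_right)

lemma level_eq_integral_drift:
  assumes pc: "piecewise_continuous_on T u" and sol: "is_solution A a B u x0 T X"
    and t: "t \<in> {0..T}"
  shows "\<beta> \<bullet> X t = \<beta> \<bullet> x0 + integral {0..t} (\<lambda>s. drift (X s))"
proof -
  have c: "continuous_on {0..T} X" and i: "X t = x0 + integral {0..t} (\<lambda>s. A *v X s + a + B *v u s)"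
    using sol t unfolding is_solution_def by auto
  have int: "(\<lambda>s. A *v X s + a + B *v u s) integrable_on {0..t}"
    by (rule solution_rhs_integrable[OF pc c]) (use t in auto)
  have "\<beta> \<bullet> integral {0..t} (\<lambda>s. A *v X s + a + B *v u s)
      = integral {0..t} ((\<lambda>v. \<beta> \<bullet> v) \<circ> (\<lambda>s. A *v X s + a + B *v u s))"
    by (rule integral_linear[OF int bounded_linear_inner_right, symmetric])
  also have "\<dots> = integral {0..t} (\<lambda>s. drift (X s))"
    by (rule integral_cong) (simp add: drift_def inner_add_right beta_orthogonal_B)
  finally show ?thesis using i by (simp add: inner_add_right)
qed

lemma continuous_on_drift_comp:
  assumes "continuous_on {0..T} X"
  shows "continuous_on {0..T} (\<lambda>s. drift (X s))"
  unfolding drift_def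
  by (intro continuous_intros bounded_linear.continuous_on[OF matrix_vector_mul_bounded_linear assms])

lemma level_diff_eq_integral:
  assumes pc: "piecewise_continuous_on T u" and sol: "is_solution A a B u x0 T X"
    and t: "0 \<le> t1" "t1 \<le> t2" "t2 \<le> T"
  shows "\<beta> \<bullet> X t2 - \<beta> \<bullet> X t1 = integral {t1..t2} (\<lambda>s. drift (X s))"
proof -
  have c: "continuous_on {0..T} X" using sol unfolding is_solution_def by auto
  have ci: "(\<lambda>s. drift (X s)) integrable_on {0..t2}"
    by (rule integrable_continuous_real, rule continuous_on_subset[OF continuous_on_drift_comp[OF c]])
      (use t in auto)
  have "integral {0..t1} (\<lambda>s. drift (X s)) + integral {t1..t2} (\<lambda>s. drift (X s))
      = integral {0..t2} (\<lambda>s. drift (X s))"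
    using Henstock_Kurzweil_Integration.integral_combine[OF t(1,2) ci] .
  then show ?thesis
    using level_eq_integral_drift[OF pc sol, of t1] level_eq_integral_drift[OF pc sol, of t2] t by auto
qed

lemma level_has_derivative:
  assumes pc: "piecewise_continuous_on T u" and sol: "is_solution A a B u x0 T X"
    and s: "0 < s" "s < T"
  shows "((\<lambda>t. \<beta> \<bullet> X t) has_real_derivative drift (X s)) (at s)"
proof -
  have c: "continuous_on {0..T} X" using sol unfolding is_solution_def by auto
  have "((\<lambda>t. integral {0..t} (\<lambda>s. drift (X s))) has_vector_derivative drift (X s)) (at s within {0..T})"
    by (rule integral_has_vector_derivative[OF continuous_on_drift_comp[OF c]]) (use s in auto)
  then have d: "((\<lambda>t. \<beta> \<bullet> x0 + integral {0..t} (\<lambda>s. drift (X s))) has_real_derivative drift (X s))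
      (at s)"
    using s at_within_Icc_at[of 0 s T]
    by (auto simp: has_real_derivative_iff_has_vector_derivative intro!: derivative_eq_intros)
  show ?thesis
    by (rule has_field_derivative_transform_within_open[OF d, of "{0<..<T}"])
       (use s level_eq_integral_drift[OF pc sol] in auto)
qed

lemma level_flat_if_not_decreasing:
  assumes pc: "piecewise_continuous_on T u" and sol: "is_solution A a B u x0 T X"
    and inP: "\<forall>t\<in>{0..T}. X t \<in> P" and drift_nonpos: "\<forall>x\<in>P. drift x \<le> 0"
    and t1: "t1 \<in> {0..T}" and lt: "t1 < T" and le: "\<beta> \<bullet> X t1 \<le> \<beta> \<bullet> X T"
    and s: "s \<in> {t1..T}"
  shows "drift (X s) = 0 \<and> \<beta> \<bullet> X s = \<beta> \<bullet> X t1"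
proof -
  have c: "continuous_on {0..T} X" using sol unfolding is_solution_def by auto
  have cont: "continuous_on {t1..T} (\<lambda>s. drift (X s))"
    by (rule continuous_on_subset[OF continuous_on_drift_comp[OF c]]) (use t1 in auto)
  have int: "(\<lambda>s. drift (X s)) integrable_on {t1..T}" using cont by (rule integrable_continuous_real)
  have I: "\<beta> \<bullet> X T - \<beta> \<bullet> X t1 = integral {t1..T} (\<lambda>s. drift (X s))"
    by (rule level_diff_eq_integral[OF pc sol]) (use t1 in auto)
  have "integral {t1..T} (\<lambda>s. drift (X s)) \<le> integral {t1..T} (\<lambda>s. 0::real)"
    by (rule integral_le[OF int]) (use inP drift_nonpos t1 in auto)
  then have I0: "integral {t1..T} (\<lambda>s. drift (X s)) = 0" using I le by simp
  have z: "drift (X s') = 0" if "s' \<in> {t1..T}" for s'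
  proof -
    have "(\<lambda>s. - drift (X s)) x = 0" if "x \<in> cbox t1 T" for x
    proof (rule has_integral_0_cbox_imp_0[of t1 T "\<lambda>s. - drift (X s)"])
      show "continuous_on (cbox t1 T) (\<lambda>s. - drift (X s))" using cont by (auto intro: continuous_intros)
      show "\<And>x. x \<in> box t1 T \<Longrightarrow> 0 \<le> - drift (X x)" using inP drift_nonpos t1 by force
      show "((\<lambda>s. - drift (X s)) has_integral 0) (cbox t1 T)"
        using has_integral_neg[OF integrable_integral[OF int]] I0 by simp
      show "box t1 T \<noteq> {}" using lt by simp
    qed (use that in auto)
    then show ?thesis using that by simp
  qed
  have "\<beta> \<bullet> X s - \<beta> \<bullet> X t1 = integral {t1..s} (\<lambda>s. drift (X s))"
    by (rule level_diff_eq_integral[OF pc sol]) (use t1 s in auto)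
  also have "\<dots> = integral {t1..s} (\<lambda>s. 0)" by (rule integral_cong) (use z s in auto)
  finally show ?thesis using z s by simp
qed

lemma level_stays_maximal:
  assumes pc: "piecewise_continuous_on T u" and sol: "is_solution A a B u x0 T X"
    and inP: "\<forall>t\<in>{0..T}. X t \<in> P"
    and t1: "t1 \<in> {0..T}" and mx: "\<forall>y\<in>P. \<beta> \<bullet> y \<le> \<beta> \<bullet> X t1"
    and bd: "\<forall>y\<in>P. - drift y \<le> C * (\<beta> \<bullet> X t1 - \<beta> \<bullet> y)"
    and s: "s \<in> {t1..T}"
  shows "\<beta> \<bullet> X s = \<beta> \<bullet> X t1"
proof -
  define L where "L = \<beta> \<bullet> X t1"
  define k where "k t = exp (- C * t) * (L - \<beta> \<bullet> X t)" for t
  have c: "continuous_on {0..T} X" using sol unfolding is_solution_def by auto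
  \<comment> \<open>Gronwall: the bound on the drift makes \<open>k\<close> nonincreasing; \<open>k t1 = 0\<close> and \<open>k \<ge> 0\<close> by maximality.\<close>
  have "k t1 \<ge> k s"
  proof (rule DERIV_nonpos_imp_decreasing_open[of t1 s k])
    show "t1 \<le> s" using s by simp
    show "continuous_on {t1..s} k" unfolding k_def
      by (intro continuous_intros bounded_linear.continuous_on[OF bounded_linear_inner_right]
          continuous_on_subset[OF c]) (use t1 s in auto)
    fix x assume x: "t1 < x" "x < s"
    have d: "((\<lambda>t. \<beta> \<bullet> X t) has_real_derivative drift (X x)) (at x)"
      by (rule level_has_derivative[OF pc sol]) (use x t1 s in auto)
    have "X x \<in> P" using inP x t1 s by auto
    then have le: "- drift (X x) - C * (L - \<beta> \<bullet> X x) \<le> 0" using bd L_def by force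
    have "(k has_real_derivative (exp (- C * x) * (- C) * (L - \<beta> \<bullet> X x) + exp (- C * x) * (- drift (X x)))) (at x)"
      unfolding k_def by (auto intro!: derivative_eq_intros d)
    moreover have "exp (- C * x) * (- C) * (L - \<beta> \<bullet> X x) + exp (- C * x) * (- drift (X x))
        = exp (- C * x) * (- drift (X x) - C * (L - \<beta> \<bullet> X x))" by (simp add: algebra_simps)
    moreover have "exp (- C * x) * (- drift (X x) - C * (L - \<beta> \<bullet> X x)) \<le> 0"
      using le by (simp add: mult_nonneg_nonpos)
    ultimately show "\<exists>y. DERIV k x :> y \<and> y \<le> 0" by auto
  qed
  then have "exp (- C * s) * (L - \<beta> \<bullet> X s) \<le> 0" by (simp add: k_def L_def)
  then have "L - \<beta> \<bullet> X s \<le> 0" by (simp add: mult_le_0_iff)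
  moreover have "\<beta> \<bullet> X s \<le> L" using mx inP s t1 L_def by auto
  ultimately show ?thesis unfolding L_def by simp
qed

lemma convex_drift_depth_bound: "convex {y. - drift y \<le> C * (L - \<beta> \<bullet> y)}"
  unfolding convex_def
proof (intro allI impI ballI, clarsimp)
  fix x y :: "real^'n" and u v :: real
  assume xy: "- drift x \<le> C * (L - \<beta> \<bullet> x)" "- drift y \<le> C * (L - \<beta> \<bullet> y)"
    and uv: "0 \<le> u" "0 \<le> v" "u + v = 1"
  have u: "u = 1 - v" using uv by simp
  have "- drift (u *\<^sub>R x + v *\<^sub>R y) = u * (- drift x) + v * (- drift y)"
    using drift_affine_comb[of v x y] u by simp
  also have "\<dots> \<le> u * (C * (L - \<beta> \<bullet> x)) + v * (C * (L - \<beta> \<bullet> y))"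
    using xy uv by (intro add_mono mult_left_mono) auto
  also have "\<dots> = C * (L - \<beta> \<bullet> (u *\<^sub>R x + v *\<^sub>R y))"
    by (simp add: algebra_simps inner_add_right u)
  finally show "- drift (u *\<^sub>R x + v *\<^sub>R y) \<le> C * (L - \<beta> \<bullet> (u *\<^sub>R x + v *\<^sub>R y))" .
qed

lemma drift_bounded_by_depth:
  assumes poly: "polytope P" and mx: "\<forall>y\<in>P. \<beta> \<bullet> y \<le> L"
    and top: "\<forall>y\<in>P. \<beta> \<bullet> y = L \<longrightarrow> drift y = 0" and drift_nonpos: "\<forall>y\<in>P. drift y \<le> 0"
  shows "\<exists>C. \<forall>y\<in>P. - drift y \<le> C * (L - \<beta> \<bullet> y)"
proof -
  \<comment> \<open>The bound is a convex condition on \<open>y\<close>, so it suffices to choose \<open>C\<close> for the vertices.\<close>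
  obtain V where V: "finite V" "P = convex hull V" using poly unfolding polytope_def by blast
  define W where "W = {v\<in>V. \<beta> \<bullet> v < L}"
  define C where "C = (\<Sum>v\<in>W. (- drift v) / (L - \<beta> \<bullet> v))"
  have VP: "v \<in> P" if "v \<in> V" for v using that V by (simp add: hull_inc)
  have vb: "- drift v \<le> C * (L - \<beta> \<bullet> v)" if v: "v \<in> V" for v
  proof (cases "\<beta> \<bullet> v = L")
    case True then show ?thesis using top VP[OF v] by simp
  next
    case False
    then have vW: "v \<in> W" using mx VP[OF v] v by (force simp: W_def)
    have pos: "L - \<beta> \<bullet> v > 0" using vW by (simp add: W_def)
    have "(- drift v) / (L - \<beta> \<bullet> v) \<le> C" unfolding C_def
    proof (rule member_le_sum[OF vW])
      show "finite W" using V(1) by (simp add: W_def)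
      fix x assume "x \<in> W - {v}"
      then have "x \<in> P" "\<beta> \<bullet> x < L" using VP by (auto simp: W_def)
      then show "0 \<le> - drift x / (L - \<beta> \<bullet> x)" using drift_nonpos by (auto intro!: divide_nonpos_pos)
    qed
    then show ?thesis using pos by (simp add: pos_divide_le_eq neg_divide_le_eq field_simps)
  qed
  have "P \<subseteq> {y. - drift y \<le> C * (L - \<beta> \<bullet> y)}"
    unfolding V(2) by (rule hull_minimal) (use vb convex_drift_depth_bound in auto)
  then show ?thesis by blast
qed

lemma level_stays_on_top_face:
  assumes pc: "piecewise_continuous_on T u" and sol: "is_solution A a B u x0 T X"
    and inP: "\<forall>t\<in>{0..T}. X t \<in> P" and poly: "polytope P" and drift_nonpos: "\<forall>y\<in>P. drift y \<le> 0"
    and t: "t \<in> {0..T}" and top: "\<forall>y\<in>P. \<beta> \<bullet> y \<le> \<beta> \<bullet> X t"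
    and face: "\<forall>y\<in>P. \<beta> \<bullet> y = \<beta> \<bullet> X t \<longrightarrow> drift y = 0"
  shows "\<beta> \<bullet> X T = \<beta> \<bullet> X t"
proof -
  obtain C where "\<forall>y\<in>P. - drift y \<le> C * (\<beta> \<bullet> X t - \<beta> \<bullet> y)"
    using drift_bounded_by_depth[OF poly top face drift_nonpos] by blast
  then show ?thesis by (rule level_stays_maximal[OF pc sol inP t top]) (use t in auto)
qed

end

section \<open>Steering by quadratic Bezier arcs\<close>

text \<open>The vector \<open>e\<close> is tangent to the level sets of \<open>\<beta> \<bullet> x\<close> and raises the drift at unit rate;
  it exists by controllability (lemma \<open>controllable_transversal\<close>).\<close>
locale steerable_system = beta_normal_system A a B \<beta>
  for A :: "real^'n^'n" and a and B :: "real^'m^'n" and \<beta> +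
  fixes P :: "(real^'n) set" and e :: "real^'n"
  assumes range_B: "\<And>y. \<beta> \<bullet> y = 0 \<Longrightarrow> \<exists>u. B *v u = y"
    and convex_P: "convex P" and drift_nonpos: "\<forall>x\<in>P. drift x \<le> 0"
    and level_e: "\<beta> \<bullet> e = 0" and drift_e: "\<beta> \<bullet> (A *v e) = 1"
begin

lemma drift_add_e: "drift (x + t *\<^sub>R e) = drift x + t"
  unfolding drift_def using drift_e
  by (simp add: matrix_vector_right_distrib matrix_vector_mult_scaleR inner_add_right algebra_simps)

lemma level_add_e: "\<beta> \<bullet> (x + t *\<^sub>R e) = \<beta> \<bullet> x"
  using level_e by (simp add: inner_add_right)

lemma drift_neg_if_ball:
  assumes "ball z \<rho> \<subseteq> P" "\<rho> > 0"
  shows "drift z < 0"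
proof -
  define t where "t = \<rho> / (2 * norm e)"
  have ne: "norm e > 0" using drift_e by auto
  have t: "t > 0" using assms ne by (simp add: t_def)
  have "dist z (z + t *\<^sub>R e) = t * norm e" using t by (simp add: dist_norm)
  also have "\<dots> < \<rho>" using ne assms by (simp add: t_def)
  finally have "z + t *\<^sub>R e \<in> P" using assms by auto
  then have "drift z + t \<le> 0" using drift_nonpos drift_add_e by metis
  then show ?thesis using t by simp
qed

lemma bezier_control:
  assumes \<tau>: "\<tau> > 0"
    and level_r: "\<beta> \<bullet> (r - p) = \<tau> / 2 * drift p" and level_q: "\<beta> \<bullet> (q - r) = \<tau> / 2 * drift q"
    and drift_r: "drift r = (drift p + drift q) / 2"
  shows "\<exists>u. piecewise_continuous_on \<tau> u \<and>
    (\<forall>t. A *v (p + (2 * (t / \<tau>)) *\<^sub>R (r - p) + (t / \<tau>)\<^sup>2 *\<^sub>R (p - 2 *\<^sub>R r + q)) + a + B *v u t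
       = (2 / \<tau>) *\<^sub>R (r - p) + (2 * t / \<tau>\<^sup>2) *\<^sub>R (p - 2 *\<^sub>R r + q))"
proof -
  \<comment> \<open>The required \<open>B u t\<close> is \<open>Y0 + (t/\<tau>) Y1 + (t/\<tau>)\<^sup>2 Y2\<close>; each coefficient is orthogonal to \<open>\<beta>\<close>.\<close>
  define Y0 where "Y0 = (2 / \<tau>) *\<^sub>R (r - p) - A *v p - a"
  define Y1 where "Y1 = (2 / \<tau>) *\<^sub>R (p - 2 *\<^sub>R r + q) - 2 *\<^sub>R (A *v (r - p))"
  define Y2 where "Y2 = - (A *v (p - 2 *\<^sub>R r + q))"
  have dp: "drift p = \<beta> \<bullet> (A *v p) + \<beta> \<bullet> a" and dq: "drift q = \<beta> \<bullet> (A *v q) + \<beta> \<bullet> a"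
    and dr: "drift r = \<beta> \<bullet> (A *v r) + \<beta> \<bullet> a" by (simp_all add: drift_def inner_add_right)
  have "\<beta> \<bullet> Y0 = 0" using level_r \<tau> unfolding Y0_def dp
    by (simp add: inner_diff_right inner_add_right field_simps)
  then obtain U0 where U0: "B *v U0 = Y0" using range_B by blast
  have "\<beta> \<bullet> Y2 = 0" using drift_r unfolding Y2_def dp dq dr
    by (simp add: inner_diff_right inner_add_right matrix_vector_right_distrib
        matrix_vector_mult_diff_distrib algebra_simps)
  then obtain U2 where U2: "B *v U2 = Y2" using range_B by blast
  have "\<beta> \<bullet> Y1 = (2 / \<tau>) * (\<beta> \<bullet> (q - r) - \<beta> \<bullet> (r - p)) - 2 * (drift r - drift p)"
    unfolding Y1_def dp dr
    by (simp add: inner_diff_right inner_add_right matrix_vector_right_distrib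
        matrix_vector_mult_diff_distrib algebra_simps)
  also have "\<dots> = 0" using level_r level_q drift_r \<tau> by (simp add: field_simps)
  finally obtain U1 where U1: "B *v U1 = Y1" using range_B by blast
  define u where "u t = U0 + (t / \<tau>) *\<^sub>R U1 + (t / \<tau>)\<^sup>2 *\<^sub>R U2" for t
  have "piecewise_continuous_on \<tau> u"
    unfolding piecewise_continuous_on_def using \<tau>
    by (intro exI[of _ "[0, \<tau>]"]) (auto intro!: exI[of _ u] continuous_intros simp: u_def)
  moreover have "A *v (p + (2 * (t / \<tau>)) *\<^sub>R (r - p) + (t / \<tau>)\<^sup>2 *\<^sub>R (p - 2 *\<^sub>R r + q)) + a + B *v u t
       = (2 / \<tau>) *\<^sub>R (r - p) + (2 * t / \<tau>\<^sup>2) *\<^sub>R (p - 2 *\<^sub>R r + q)" for t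
    unfolding u_def using \<tau>
    by (simp add: matrix_vector_right_distrib matrix_vector_mult_diff_distrib
        matrix_vector_mult_scaleR U0 U1 U2 Y0_def Y1_def Y2_def algebra_simps power2_eq_square
        field_simps)
  ultimately show ?thesis by blast
qed

lemma bezier_trajectory:
  assumes "\<tau> > 0"
    and "\<beta> \<bullet> (r - p) = \<tau> / 2 * drift p" "\<beta> \<bullet> (q - r) = \<tau> / 2 * drift q"
    and "drift r = (drift p + drift q) / 2"
  shows "\<exists>u. piecewise_continuous_on \<tau> u \<and>
    is_solution A a B u p \<tau> (\<lambda>t. p + (2 * (t / \<tau>)) *\<^sub>R (r - p) + (t / \<tau>)\<^sup>2 *\<^sub>R (p - 2 *\<^sub>R r + q))"
proof -
  define X where "X t = p + (2 * (t / \<tau>)) *\<^sub>R (r - p) + (t / \<tau>)\<^sup>2 *\<^sub>R (p - 2 *\<^sub>R r + q)" for t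
  define X' where "X' t = (2 / \<tau>) *\<^sub>R (r - p) + (2 * t / \<tau>\<^sup>2) *\<^sub>R (p - 2 *\<^sub>R r + q)" for t
  obtain u where pc: "piecewise_continuous_on \<tau> u" and rhs: "\<And>t. A *v X t + a + B *v u t = X' t"
    using bezier_control[OF assms] unfolding X_def X'_def by blast
  have der: "(X has_vector_derivative X' t) (at t)" for t
  proof -
    have "((\<lambda>t. 2 * (t / \<tau>)) has_field_derivative 2 / \<tau>) (at t)"
      using assms(1) by (auto intro!: derivative_eq_intros)
    moreover have "((\<lambda>t. (t / \<tau>)\<^sup>2) has_field_derivative 2 * t / \<tau>\<^sup>2) (at t)"
      using assms(1) by (auto intro!: derivative_eq_intros simp: power2_eq_square)
    ultimately have "(X has_vector_derivative
       (0 + ((2 * (t / \<tau>)) *\<^sub>R 0 + (2 / \<tau>) *\<^sub>R (r - p)) +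
        ((t / \<tau>)\<^sup>2 *\<^sub>R 0 + (2 * t / \<tau>\<^sup>2) *\<^sub>R (p - 2 *\<^sub>R r + q)))) (at t)"
      unfolding X_def[abs_def]
      by (intro has_vector_derivative_add has_vector_derivative_scaleR has_vector_derivative_const)
    then show ?thesis unfolding X'_def by simp
  qed
  have "is_solution A a B u p \<tau> X"
  proof (rule is_solution_of_has_vector_derivative)
    show "X 0 = p" by (simp add: X_def)
    fix t
    show "(X has_vector_derivative A *v X t + a + B *v u t) (at t within {0..\<tau>})"
      unfolding rhs by (rule has_vector_derivative_at_within[OF der])
  qed
  then show ?thesis using pc unfolding X_def by blast
qed

lemma reaches_along_bezier:
  assumes "p \<in> P" "r \<in> P" "q \<in> P" "\<tau> > 0"
    and "\<beta> \<bullet> (r - p) = \<tau> / 2 * drift p" "\<beta> \<bullet> (q - r) = \<tau> / 2 * drift q"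
    and "drift r = (drift p + drift q) / 2"
  shows "reaches A a B P p {q}"
proof -
  define X where "X t = p + (2 * (t / \<tau>)) *\<^sub>R (r - p) + (t / \<tau>)\<^sup>2 *\<^sub>R (p - 2 *\<^sub>R r + q)" for t
  obtain u where "piecewise_continuous_on \<tau> u" "is_solution A a B u p \<tau> X"
    using bezier_trajectory[OF assms(4-7)] unfolding X_def by blast
  moreover have "X t \<in> P" if "t \<in> {0..\<tau>}" for t
  proof -
    have "X t \<in> convex hull {p, r, q}"
      unfolding X_def using that assms(4) by (intro quad_bezier_mem_convex_hull) auto
    also have "convex hull {p, r, q} \<subseteq> P" using assms(1-3) convex_P by (simp add: hull_minimal)
    finally show ?thesis .
  qed
  moreover have "X \<tau> = q" using assms(4) by (simp add: X_def scaleR_2 algebra_simps del: scaleR_collapse)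
  ultimately show ?thesis unfolding reaches_def
    using assms(4) by (intro exI[of _ u] exI[of _ \<tau>] exI[of _ X]) auto
qed

text \<open>\<open>r\<close> is the control point of a quadratic Bezier trajectory from \<open>p\<close> to \<open>q\<close>: the conditions
  fix its level and its drift (lemma \<open>reaches_if_joinable\<close>).\<close>
definition joinable :: "real^'n \<Rightarrow> real^'n \<Rightarrow> bool" where
  "joinable p q \<longleftrightarrow> drift p + drift q < 0 \<and>
     (\<exists>r\<in>P. \<beta> \<bullet> r = \<beta> \<bullet> p + drift p * (\<beta> \<bullet> q - \<beta> \<bullet> p) / (drift p + drift q) \<and>
             drift r = (drift p + drift q) / 2)"

lemma joinable_commute: "joinable p q \<longleftrightarrow> joinable q p"
proof -
  have "\<beta> \<bullet> p + drift p * (\<beta> \<bullet> q - \<beta> \<bullet> p) / (drift p + drift q)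
      = \<beta> \<bullet> q + drift q * (\<beta> \<bullet> p - \<beta> \<bullet> q) / (drift q + drift p)"
    if "drift p + drift q < 0"
    using that by (simp add: field_simps)
  then show ?thesis unfolding joinable_def by (auto simp: add.commute)
qed

lemma reaches_if_joinable:
  assumes "p \<in> P" "q \<in> P" "\<beta> \<bullet> q < \<beta> \<bullet> p" "joinable p q"
  shows "reaches A a B P p {q}"
proof -
  obtain r where r: "r \<in> P" "\<beta> \<bullet> r = \<beta> \<bullet> p + drift p * (\<beta> \<bullet> q - \<beta> \<bullet> p) / (drift p + drift q)"
    "drift r = (drift p + drift q) / 2" and S: "drift p + drift q < 0"
    using assms(4) unfolding joinable_def by blast
  define \<tau> where "\<tau> = 2 * (\<beta> \<bullet> q - \<beta> \<bullet> p) / (drift p + drift q)"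
  show ?thesis
  proof (rule reaches_along_bezier[OF assms(1) r(1) assms(2), of \<tau>])
    show "0 < \<tau>" using assms(3) S by (simp add: \<tau>_def divide_neg_neg)
    show "\<beta> \<bullet> (r - p) = \<tau> / 2 * drift p" "\<beta> \<bullet> (q - r) = \<tau> / 2 * drift q"
      using r(2) S by (simp_all add: \<tau>_def inner_diff_right field_simps)
  qed (rule r(3))
qed

lemma joinable_if_ball:
  assumes "drift p \<le> 0" "drift q \<le> 0" "drift p + drift q < 0"
    and "ball ((1 - drift p / (drift p + drift q)) *\<^sub>R p + (drift p / (drift p + drift q)) *\<^sub>R q) \<rho> \<subseteq> P"
    and "(drift p - drift q)\<^sup>2 * norm e < \<rho> * (- 2 * (drift p + drift q))"
  shows "joinable p q"
proof -
  define S where "S = drift p + drift q"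
  define \<theta> where "\<theta> = drift p / S"
  define C where "C = (1 - \<theta>) *\<^sub>R p + \<theta> *\<^sub>R q"
  have S: "S < 0" using assms(3) by (simp add: S_def)
  have "drift C = (1 - \<theta>) * drift p + \<theta> * drift q" unfolding C_def by (rule drift_affine_comb)
  also have "\<dots> = drift q / S * drift p + drift p / S * drift q"
    using S by (simp add: \<theta>_def S_def field_simps)
  also have "\<dots> = 2 * drift p * drift q / S" by (simp add: add_divide_distrib[symmetric])
  finally have dC: "(drift p + drift q) / 2 - drift C = (drift p - drift q)\<^sup>2 / (2 * S)"
    using S by (simp add: S_def field_simps power2_eq_square)
  \<comment> \<open>Correct the drift at the centre \<open>C\<close> by moving along \<open>e\<close>; this stays within the ball.\<close>
  define r where "r = C + ((drift p - drift q)\<^sup>2 / (2 * S)) *\<^sub>R e"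
  have "norm (r - C) * (- 2 * S) = (drift p - drift q)\<^sup>2 * norm e"
    using S by (simp add: r_def abs_div abs_mult)
  then have "norm (r - C) * (- 2 * S) < \<rho> * (- 2 * S)" using assms(5) by (simp add: S_def)
  then have "norm (r - C) < \<rho>" by (rule mult_right_less_imp_less) (use S in simp)
  then have "r \<in> P" using assms(4) by (auto simp: C_def \<theta>_def S_def dist_norm norm_minus_commute)
  moreover have "\<beta> \<bullet> r = \<beta> \<bullet> p + drift p * (\<beta> \<bullet> q - \<beta> \<bullet> p) / (drift p + drift q)"
  proof -
    have "\<beta> \<bullet> r = (1 - \<theta>) * (\<beta> \<bullet> p) + \<theta> * (\<beta> \<bullet> q)"
      unfolding r_def level_add_e C_def by (simp add: inner_add_right)
    then show ?thesis using S by (simp add: \<theta>_def S_def field_simps)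
  qed
  moreover have "drift r = (drift p + drift q) / 2" unfolding r_def drift_add_e dC[symmetric] by simp
  ultimately show ?thesis unfolding joinable_def using assms(3) by blast
qed

lemma joinable_at_level:
  assumes "x \<in> P" "drift x = 0" "z \<in> P" "\<beta> \<bullet> z = \<beta> \<bullet> x" "drift z < 0"
    and "drift y < 0" "2 * drift z \<le> drift y"
  shows "joinable x y"
proof -
  define s where "s = drift y / (2 * drift z)"
  have s: "0 \<le> s" "s \<le> 1" using assms(5-7) by (auto simp: s_def divide_le_eq_1 zero_le_divide_iff)
  define r where "r = (1 - s) *\<^sub>R x + s *\<^sub>R z"
  have "r \<in> P" using convex_P assms(1,3) s by (simp add: r_def convexD)
  moreover have "\<beta> \<bullet> r = \<beta> \<bullet> x" using assms(4) by (simp add: r_def inner_add_right algebra_simps)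
  moreover have "drift r = drift y / 2"
    unfolding r_def drift_affine_comb using assms(2,5) by (simp add: s_def)
  ultimately show ?thesis unfolding joinable_def using assms(2,6) by auto
qed

lemma joinable_in_tube:
  assumes tube: "\<forall>s\<in>{0..1}. ball ((1 - s) *\<^sub>R u + s *\<^sub>R v) \<rho> \<subseteq> P" and \<rho>: "\<rho> > 0"
    and s1: "0 \<le> s1" "s1 \<le> 1" and s2: "0 \<le> s2" "s2 \<le> 1"
    and p: "p = (1 - s1) *\<^sub>R u + s1 *\<^sub>R v" and q: "q = (1 - s2) *\<^sub>R u + s2 *\<^sub>R v"
    and close: "\<bar>drift p - drift q\<bar> * norm e \<le> \<rho>"
  shows "joinable p q"
proof -
  have "ball p \<rho> \<subseteq> P" "ball q \<rho> \<subseteq> P" using tube s1 s2 unfolding p q by auto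
  then have dp: "drift p < 0" and dq: "drift q < 0" using drift_neg_if_ball \<rho> by auto
  define \<theta> where "\<theta> = drift p / (drift p + drift q)"
  have \<theta>: "0 \<le> \<theta>" "\<theta> \<le> 1" using dp dq by (auto simp: \<theta>_def divide_le_eq_1 divide_nonpos_neg)
  define s where "s = (1 - \<theta>) * s1 + \<theta> * s2"
  have "0 \<le> s" "s \<le> 1"
    using \<theta> s1 s2 convex_bound_le[of s1 1 s2 "1 - \<theta>" \<theta>] by (auto simp: s_def)
  moreover have "(1 - \<theta>) *\<^sub>R p + \<theta> *\<^sub>R q = (1 - s) *\<^sub>R u + s *\<^sub>R v"
    unfolding p q s_def by (simp add: algebra_simps)
  ultimately have "ball ((1 - \<theta>) *\<^sub>R p + \<theta> *\<^sub>R q) \<rho> \<subseteq> P" using tube by auto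
  moreover have "(drift p - drift q)\<^sup>2 * norm e < \<rho> * (- 2 * (drift p + drift q))"
  proof -
    have "(drift p - drift q)\<^sup>2 * norm e = \<bar>drift p - drift q\<bar> * (\<bar>drift p - drift q\<bar> * norm e)"
      by (simp add: power2_eq_square)
    also have "\<dots> \<le> \<bar>drift p - drift q\<bar> * \<rho>" using close by (intro mult_left_mono) auto
    also have "\<dots> \<le> - (drift p + drift q) * \<rho>" using dp dq \<rho> by (intro mult_right_mono) auto
    also have "\<dots> < \<rho> * (- 2 * (drift p + drift q))"
      using mult_pos_neg[of \<rho> "drift p + drift q"] dp dq \<rho> by (simp add: algebra_simps)
    finally show ?thesis .
  qed
  ultimately show ?thesis unfolding \<theta>_def using dp dq by (intro joinable_if_ball) auto
qed

lemma reaches_along_tube: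
  assumes lt: "\<beta> \<bullet> v < \<beta> \<bullet> u" and \<rho>: "\<rho> > 0"
    and tube: "\<forall>s\<in>{0..1}. ball ((1 - s) *\<^sub>R u + s *\<^sub>R v) \<rho> \<subseteq> P"
  shows "reaches A a B P u {v}"
proof -
  define D where "D = \<bar>drift v - drift u\<bar>"
  obtain N :: nat where N: "D * norm e / \<rho> + 1 < real N" using reals_Archimedean2 by blast
  have "D * norm e / \<rho> \<ge> 0" using \<rho> by (simp add: D_def)
  then have N0: "real N > 0" using N by linarith
  have ND: "D * norm e \<le> \<rho> * real N" using N \<rho> by (simp add: field_simps)
  define w where "w k = (1 - real k / real N) *\<^sub>R u + (real k / real N) *\<^sub>R v" for k
  have w_ball: "ball (w j) \<rho> \<subseteq> P" if "j \<le> N" for j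
    using tube that N0 unfolding w_def by auto
  then have w_P: "w j \<in> P" if "j \<le> N" for j using that \<rho> by (meson centre_in_ball subsetD)
  have step: "reaches A a B P (w k) {w (Suc k)}" if k: "Suc k \<le> N" for k
  proof (rule reaches_if_joinable)
    show "w k \<in> P" "w (Suc k) \<in> P" using w_P k by auto
    show "\<beta> \<bullet> w (Suc k) < \<beta> \<bullet> w k"
      using lt N0 by (simp add: w_def inner_add_right field_simps)
    have "drift (w k) - drift (w (Suc k)) = (drift u - drift v) / real N"
      unfolding w_def drift_affine_comb using N0 by (simp add: field_simps)
    then have "\<bar>drift (w k) - drift (w (Suc k))\<bar> * norm e = D * norm e / real N"
      using N0 by (simp add: D_def abs_minus_commute)
    also have "\<dots> \<le> \<rho>" using ND N0 by (simp add: divide_le_eq mult.commute)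
    finally show "joinable (w k) (w (Suc k))"
      using joinable_in_tube[OF tube \<rho>, of "real k / real N" "real (Suc k) / real N"] k N0
      by (simp add: w_def)
  qed
  have "reaches A a B P u {w k}" if "k \<le> N" for k
    using that
  proof (induction k)
    case 0
    then show ?case using reaches_refl[of u P "{u}"] w_P[of 0] by (simp add: w_def)
  next
    case (Suc k)
    then show ?case using reaches_trans step by (metis Suc_leD)
  qed
  from this[of N] show ?thesis using N0 by (simp add: w_def)
qed

definition drifting_level :: "real \<Rightarrow> bool" where
  "drifting_level L \<longleftrightarrow> (\<exists>z\<in>P. \<beta> \<bullet> z = L \<and> drift z < 0)"

lemma joinable_towards_interior_step:
  assumes x: "x \<in> P" and dx: "drift x < 0" and ball: "ball c \<rho> \<subseteq> P" and \<rho>: "\<rho> > 0"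
    and l: "0 < l" "l < 1" and small: "l * ((drift x - drift c)\<^sup>2 * norm e) < 2 * (- drift x) * \<rho>"
  shows "joinable x ((1 - l) *\<^sub>R x + l *\<^sub>R c)"
proof -
  define y where "y = (1 - l) *\<^sub>R x + l *\<^sub>R c"
  have dy: "drift y = (1 - l) * drift x + l * drift c" unfolding y_def by (rule drift_affine_comb)
  have "(1 - l) * drift x \<le> 0" using dx l by (intro mult_nonneg_nonpos) auto
  moreover have "l * drift c < 0" using drift_neg_if_ball[OF ball \<rho>] l by (simp add: mult_pos_neg)
  ultimately have dy': "drift y < 0" by (simp add: dy)
  define \<theta> where "\<theta> = drift x / (drift x + drift y)"
  have \<theta>: "0 \<le> \<theta>" "\<theta> \<le> 1" using dx dy' by (auto simp: \<theta>_def divide_le_eq_1 divide_nonpos_neg)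
  \<comment> \<open>The centre lies on the segment towards \<open>c\<close>, at distance \<open>\<theta> l\<close>, so a ball of radius
    \<open>\<theta> l \<rho>\<close> around it fits in \<open>P\<close>, while the drift mismatch is only of order \<open>l\<^sup>2\<close>.\<close>
  have "(1 - \<theta>) *\<^sub>R x + \<theta> *\<^sub>R y = (1 - \<theta> * l) *\<^sub>R x + (\<theta> * l) *\<^sub>R c"
    by (simp add: y_def algebra_simps)
  moreover have "0 \<le> \<theta> * l" "\<theta> * l \<le> 1" using \<theta> l by (auto intro: mult_le_one)
  then have "ball ((1 - \<theta> * l) *\<^sub>R x + (\<theta> * l) *\<^sub>R c) (\<theta> * l * \<rho>) \<subseteq> P"
    by (rule convex_ball_towards[OF convex_P x ball])
  ultimately have "ball ((1 - \<theta>) *\<^sub>R x + \<theta> *\<^sub>R y) (\<theta> * l * \<rho>) \<subseteq> P" by simp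
  moreover have "(drift x - drift y)\<^sup>2 * norm e < \<theta> * l * \<rho> * (- 2 * (drift x + drift y))"
  proof -
    have "drift x - drift y = l * (drift x - drift c)" unfolding dy by (simp add: algebra_simps)
    then have "(drift x - drift y)\<^sup>2 * norm e = l * (l * ((drift x - drift c)\<^sup>2 * norm e))"
      by (simp add: power_mult_distrib power2_eq_square)
    also have "\<dots> < l * (2 * (- drift x) * \<rho>)" using small l by (intro mult_strict_left_mono) auto
    also have "\<dots> = - 2 * l * \<rho> * (\<theta> * (drift x + drift y))" using dx dy' by (simp add: \<theta>_def)
    also have "\<dots> = \<theta> * l * \<rho> * (- 2 * (drift x + drift y))" by (simp add: algebra_simps)
    finally show ?thesis .
  qed
  ultimately show ?thesis
    unfolding y_def[symmetric] \<theta>_def using dx dy' by (intro joinable_if_ball) auto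
qed

lemma joinable_towards_interior:
  assumes x: "x \<in> P" and ball: "ball c \<rho> \<subseteq> P" and \<rho>: "\<rho> > 0" and level: "drifting_level (\<beta> \<bullet> x)"
  shows "\<forall>\<^sub>F l in at_right 0. joinable x ((1 - l) *\<^sub>R x + l *\<^sub>R c)"
proof (cases "drift x < 0")
  case True
  have "\<forall>\<^sub>F l in at_right 0. l * ((drift x - drift c)\<^sup>2 * norm e) < 2 * (- drift x) * \<rho>"
    using True \<rho> mult_pos_neg[of \<rho> "drift x"] by (intro eventually_at_right_0_mult_less) simp
  moreover have "\<forall>\<^sub>F l in at_right (0::real). l \<in> {0<..<1}" using eventually_at_right_real[of 0 1] by simp
  ultimately show ?thesis
    by eventually_elim (use joinable_towards_interior_step[OF x True ball \<rho>] in auto)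
next
  case False
  then have dx0: "drift x = 0" using drift_nonpos x by force
  obtain z where z: "z \<in> P" "\<beta> \<bullet> z = \<beta> \<bullet> x" "drift z < 0"
    using level unfolding drifting_level_def by auto
  have dc: "drift c < 0" using drift_neg_if_ball[OF ball \<rho>] .
  have "\<forall>\<^sub>F l in at_right 0. l * (- drift c) < 2 * (- drift z)"
    using z by (intro eventually_at_right_0_mult_less) simp
  moreover have "\<forall>\<^sub>F l in at_right (0::real). 0 < l" by (rule eventually_at_right_less)
  ultimately show ?thesis
  proof eventually_elim
    case (elim l)
    show ?case
      by (rule joinable_at_level[OF x dx0 z])
        (use elim dc in \<open>auto simp: drift_affine_comb dx0 mult_pos_neg\<close>)
  qed
qed

lemma reaches_down_through_interior:
  assumes x: "x \<in> P" and f: "f \<in> P" and ball: "ball c \<rho> \<subseteq> P" and \<rho>: "\<rho> > 0"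
    and below: "\<beta> \<bullet> f < \<beta> \<bullet> c" "\<beta> \<bullet> c < \<beta> \<bullet> x"
    and levels: "drifting_level (\<beta> \<bullet> x)" "drifting_level (\<beta> \<bullet> f)"
  shows "reaches A a B P x {f}"
proof -
  have "\<forall>\<^sub>F l in at_right 0. joinable x ((1 - l) *\<^sub>R x + l *\<^sub>R c) \<and>
      joinable f ((1 - l) *\<^sub>R f + l *\<^sub>R c) \<and> l \<in> {0<..<1}"
    using joinable_towards_interior[OF x ball \<rho> levels(1)]
      joinable_towards_interior[OF f ball \<rho> levels(2)] eventually_at_right_real[of 0 1]
    by (auto elim: eventually_elim2 eventually_mono intro: eventually_conj)
  then obtain l where l: "joinable x ((1 - l) *\<^sub>R x + l *\<^sub>R c)"
    "joinable f ((1 - l) *\<^sub>R f + l *\<^sub>R c)" "0 < l" "l < 1"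
    using eventually_happens[of _ "at_right (0::real)"] by auto
  define p1 where "p1 = (1 - l) *\<^sub>R x + l *\<^sub>R c"
  define p2 where "p2 = (1 - l) *\<^sub>R f + l *\<^sub>R c"
  have b1: "ball p1 (l * \<rho>) \<subseteq> P" and b2: "ball p2 (l * \<rho>) \<subseteq> P"
    unfolding p1_def p2_def using l convex_ball_towards[OF convex_P _ ball] x f by auto
  then have P12: "p1 \<in> P" "p2 \<in> P" using l \<rho> by auto
  have "(1 - l) * (\<beta> \<bullet> f) < (1 - l) * (\<beta> \<bullet> c)" "(1 - l) * (\<beta> \<bullet> c) < (1 - l) * (\<beta> \<bullet> x)"
    using l below by simp_all
  then have levels12: "\<beta> \<bullet> f < \<beta> \<bullet> p2" "\<beta> \<bullet> p2 < \<beta> \<bullet> p1" "\<beta> \<bullet> p1 < \<beta> \<bullet> x"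
    unfolding p1_def p2_def using l below by (simp_all add: inner_add_right algebra_simps)
  have "reaches A a B P x {p1}"
    using reaches_if_joinable[OF x P12(1) levels12(3)] l(1) by (simp add: p1_def)
  moreover have "reaches A a B P p1 {p2}"
    by (rule reaches_along_tube[OF levels12(2), of "l * \<rho>"])
      (use l \<rho> convex_ball_segment[OF convex_P b1 b2] in auto)
  moreover have "reaches A a B P p2 {f}"
    using reaches_if_joinable[OF P12(2) f levels12(1)] l(2) joinable_commute by (simp add: p2_def)
  ultimately show ?thesis using reaches_trans by blast
qed

lemma drifting_level_between:
  assumes ball: "ball c \<rho> \<subseteq> P" and \<rho>: "\<rho> > 0" and y: "y \<in> P"
    and between: "\<beta> \<bullet> c < L \<and> L < \<beta> \<bullet> y \<or> \<beta> \<bullet> y < L \<and> L < \<beta> \<bullet> c"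
  shows "drifting_level L"
proof -
  define s where "s = (L - \<beta> \<bullet> c) / (\<beta> \<bullet> y - \<beta> \<bullet> c)"
  have s: "0 < s" "s < 1" using between by (auto simp: s_def field_simps divide_less_eq)
  define z where "z = (1 - (1 - s)) *\<^sub>R y + (1 - s) *\<^sub>R c"
  have bz: "ball z ((1 - s) * \<rho>) \<subseteq> P"
    unfolding z_def by (rule convex_ball_towards[OF convex_P y ball]) (use s in auto)
  have "\<beta> \<bullet> z = \<beta> \<bullet> c + s * (\<beta> \<bullet> y - \<beta> \<bullet> c)" by (simp add: z_def inner_add_right algebra_simps)
  also have "\<dots> = L"
  proof -
    have "\<beta> \<bullet> y - \<beta> \<bullet> c \<noteq> 0" using between by auto
    then show ?thesis by (simp add: s_def)
  qed
  moreover have "0 < (1 - s) * \<rho>" using s \<rho> by simp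
  ultimately show ?thesis
    unfolding drifting_level_def using bz drift_neg_if_ball[OF bz] by (meson centre_in_ball subsetD)
qed

lemma exists_ball_between:
  assumes ball: "ball c \<rho> \<subseteq> P" and \<rho>: "\<rho> > 0" and x: "x \<in> P" and f: "f \<in> P"
    and below: "\<beta> \<bullet> f < \<beta> \<bullet> x"
  obtains c' \<rho>' where "\<rho>' > 0" "ball c' \<rho>' \<subseteq> P" "\<beta> \<bullet> f < \<beta> \<bullet> c'" "\<beta> \<bullet> c' < \<beta> \<bullet> x"
proof -
  define y where "y = (1 - 1 / 2) *\<^sub>R x + (1 / 2 :: real) *\<^sub>R f"
  have y: "y \<in> P" using convex_P x f by (simp add: y_def convexD)
  have "\<forall>\<^sub>F l in at_right 0. l * \<bar>\<beta> \<bullet> c - \<beta> \<bullet> y\<bar> < (\<beta> \<bullet> x - \<beta> \<bullet> f) / 2"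
    using below by (intro eventually_at_right_0_mult_less) simp
  moreover have "\<forall>\<^sub>F l in at_right (0::real). l \<in> {0<..<1}" using eventually_at_right_real[of 0 1] by simp
  ultimately obtain l where l: "l * \<bar>\<beta> \<bullet> c - \<beta> \<bullet> y\<bar> < (\<beta> \<bullet> x - \<beta> \<bullet> f) / 2" "0 < l" "l < 1"
    using eventually_happens[of _ "at_right (0::real)"] eventually_conj by fastforce
  define c' where "c' = (1 - l) *\<^sub>R y + l *\<^sub>R c"
  define d where "d = l * (\<beta> \<bullet> c - \<beta> \<bullet> y)"
  have "\<bar>d\<bar> < (\<beta> \<bullet> x - \<beta> \<bullet> f) / 2" using l by (simp add: d_def abs_mult)
  moreover have "\<beta> \<bullet> c' = \<beta> \<bullet> y + d" by (simp add: c'_def d_def inner_add_right algebra_simps)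
  moreover have "\<beta> \<bullet> y = (\<beta> \<bullet> x + \<beta> \<bullet> f) / 2" by (simp add: y_def inner_add_right)
  ultimately have "\<beta> \<bullet> f < \<beta> \<bullet> c'" "\<beta> \<bullet> c' < \<beta> \<bullet> x" unfolding abs_less_iff by (auto simp: field_simps)
  moreover have "ball c' (l * \<rho>) \<subseteq> P"
    unfolding c'_def by (rule convex_ball_towards[OF convex_P y ball]) (use l in auto)
  ultimately show ?thesis using that[of "l * \<rho>" c'] l \<rho> by simp
qed

lemma reaches_down:
  assumes x: "x \<in> P" and f: "f \<in> P" and below: "\<beta> \<bullet> f < \<beta> \<bullet> x"
    and ball: "ball c \<rho> \<subseteq> P" "\<rho> > 0"
    and level_x: "drifting_level (\<beta> \<bullet> x) \<or> (\<exists>y\<in>P. \<beta> \<bullet> x < \<beta> \<bullet> y)"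
    and level_f: "drifting_level (\<beta> \<bullet> f) \<or> (\<exists>y\<in>P. \<beta> \<bullet> y < \<beta> \<bullet> f)"
  shows "reaches A a B P x {f}"
proof -
  obtain c' \<rho>' where c': "\<rho>' > 0" "ball c' \<rho>' \<subseteq> P" "\<beta> \<bullet> f < \<beta> \<bullet> c'" "\<beta> \<bullet> c' < \<beta> \<bullet> x"
    using exists_ball_between[OF ball x f below] .
  have "drifting_level (\<beta> \<bullet> x)" "drifting_level (\<beta> \<bullet> f)"
    using level_x level_f drifting_level_between[OF c'(2,1)] c'(3,4) by auto
  then show ?thesis by (rule reaches_down_through_interior[OF x f c'(2,1,3,4)])
qed

lemma reaches_within_level:
  assumes "p \<in> P" "q \<in> P" "drift p = 0" "drift q = 0" "\<beta> \<bullet> p = \<beta> \<bullet> q"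
  shows "reaches A a B P p {q}"
proof (rule reaches_along_bezier[OF assms(1) _ assms(2), of "(1 - 1 / 2) *\<^sub>R p + (1 / 2 :: real) *\<^sub>R q" 1])
  show "(1 - 1 / 2) *\<^sub>R p + (1 / 2 :: real) *\<^sub>R q \<in> P" using convex_P assms(1,2) by (simp add: convexD)
  show "\<beta> \<bullet> ((1 - 1 / 2) *\<^sub>R p + (1 / 2 :: real) *\<^sub>R q - p) = 1 / 2 * drift p"
    "\<beta> \<bullet> (q - ((1 - 1 / 2) *\<^sub>R p + (1 / 2 :: real) *\<^sub>R q)) = 1 / 2 * drift q"
    using assms(3-5) by (simp_all add: inner_add_right inner_diff_right)
  show "drift ((1 - 1 / 2) *\<^sub>R p + (1 / 2 :: real) *\<^sub>R q) = (drift p + drift q) / 2"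
    unfolding drift_affine_comb using assms(3,4) by simp
qed simp

lemma level_face_has_nonzero_drift:
  assumes F: "F \<noteq> {}" "aff_dim F = int CARD('n) - 1" "F \<subseteq> {x. \<beta> \<bullet> x = m}"
  shows "\<exists>f\<in>F. drift f \<noteq> 0"
proof (rule ccontr)
  \<comment> \<open>The zero-drift set is affine and crosses each level transversally (along \<open>e\<close>), so it cannot
    contain the affine hull of \<open>F\<close>, which is a whole level hyperplane.\<close>
  assume "\<not> ?thesis"
  then have zero: "F \<subseteq> {x. drift x = 0}" by auto
  have "\<beta> \<noteq> 0" using drift_e by auto
  define H where "H = {x::real^'n. \<beta> \<bullet> x = m}"
  have "affine hull F \<subseteq> H" unfolding H_def by (rule hull_minimal[OF F(3)]) (rule affine_hyperplane)
  moreover have "aff_dim (affine hull F) = aff_dim H" using F(2) \<open>\<beta> \<noteq> 0\<close> by (simp add: H_def)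
  ultimately have "affine hull F = H"
    by (intro affine_dim_equal) (use F(1) affine_affine_hull affine_hyperplane H_def in auto)
  moreover have "affine {x. drift x = 0}"
    unfolding affine_def using drift_affine_comb by (auto simp: eq_diff_eq[symmetric])
  ultimately have H0: "H \<subseteq> {x. drift x = 0}" using hull_minimal[OF zero] by metis
  obtain v where v: "v \<in> F" using F(1) by auto
  then have "v \<in> H" "v + 1 *\<^sub>R e \<in> H"
    using F(3) level_add_e[of v 1] by (auto simp: H_def simp del: scaleR_one)
  then have "drift v = 0" "drift (v + 1 *\<^sub>R e) = 0" using H0 by auto
  then show False using drift_add_e[of v 1] by simp
qed

end

section \<open>Consequences of the rank and controllability hypotheses\<close>

lemma controllable_transversal:
  fixes A :: "real^'n^'n" and B :: "real^'m^'n"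
  assumes "controllable A B" "\<And>u. \<beta> \<bullet> (B *v u) = 0" "\<beta> \<noteq> 0"
  obtains e where "\<beta> \<bullet> e = 0" "\<beta> \<bullet> (A *v e) = 1"
proof -
  have "\<exists>e. \<beta> \<bullet> e = 0 \<and> \<beta> \<bullet> (A *v e) = 1"
  proof (rule ccontr)
    \<comment> \<open>Otherwise the hyperplane \<open>\<beta>\<^sup>\<bottom>\<close> is \<open>A\<close>-invariant and contains the range of \<open>B\<close>, hence the
      whole controllability span.\<close>
    assume none: "\<not> ?thesis"
    have invariant: "\<beta> \<bullet> (A *v y) = 0" if "\<beta> \<bullet> y = 0" for y
    proof (rule ccontr)
      assume "\<beta> \<bullet> (A *v y) \<noteq> 0"
      then have "\<beta> \<bullet> ((1 / (\<beta> \<bullet> (A *v y))) *\<^sub>R y) = 0 \<and> \<beta> \<bullet> (A *v ((1 / (\<beta> \<bullet> (A *v y))) *\<^sub>R y)) = 1"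
        using that by (simp add: matrix_vector_mult_scaleR)
      then show False using none by blast
    qed
    have "((\<lambda>y. A *v y) ^^ k) (B *v v) \<in> {y. \<beta> \<bullet> y = 0}" for k v
      by (induction k) (auto simp: assms(2) invariant)
    then have "span (\<Union>k < CARD('n). range (\<lambda>v. ((\<lambda>y. A *v y) ^^ k) (B *v v))) \<subseteq> {y. \<beta> \<bullet> y = 0}"
      by (intro span_minimal) (auto simp: subspace_hyperplane)
    then have "\<beta> \<in> {y. \<beta> \<bullet> y = 0}" using assms(1) unfolding controllable_def by (metis UNIV_I subsetD)
    then show False using assms(3) by simp
  qed
  then show ?thesis using that by blast
qed

lemma range_eq_hyperplane_if_rank:
  fixes B :: "real^'m^'n"
  assumes "rank B = CARD('n) - 1" "\<And>u. \<beta> \<bullet> (B *v u) = 0" "\<beta> \<noteq> 0"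
  shows "range (\<lambda>u. B *v u) = {y. \<beta> \<bullet> y = 0}"
proof (rule subspace_dim_equal)
  show "subspace (range (\<lambda>u. B *v u))"
    using linear_subspace_image[OF matrix_vector_mul_linear[of B] subspace_UNIV] by simp
  show "subspace {y. \<beta> \<bullet> y = 0}" by (rule subspace_hyperplane)
  show "range (\<lambda>u. B *v u) \<subseteq> {y. \<beta> \<bullet> y = 0}" using assms(2) by auto
  show "dim {y. \<beta> \<bullet> y = 0} \<le> dim (range (\<lambda>u. B *v u))"
    using dim_hyperplane[OF assms(3)] assms(1) by (simp add: rank_dim_range)
qed

section \<open>The reachable set\<close>

text \<open>\<open>lower_unreachable\<close> and \<open>upper_unreachable\<close> are the sets \<open>\<A>\<^sup>-\<close> and \<open>\<A>\<^sup>+\<close> of the paper, with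
  \<open>\<O> = {x. drift x = 0}\<close>.\<close>
locale reach_problem = steerable_system A a B \<beta> P e
  for A :: "real^'n^'n" and a and B :: "real^'m^'n" and \<beta> P e +
  fixes F :: "(real^'n) set" and vm vp :: "real^'n"
  assumes polytope_P: "polytope P" and interior_P: "interior P \<noteq> {}"
    and convex_F: "convex F" and aff_dim_F: "aff_dim F = int CARD('n) - 1" and F_subset_P: "F \<subseteq> P"
    and vm: "vm \<in> F" "\<forall>x\<in>F. \<beta> \<bullet> vm \<le> \<beta> \<bullet> x"
    and vp: "vp \<in> F" "\<forall>x\<in>F. \<beta> \<bullet> x \<le> \<beta> \<bullet> vp"
begin

definition top_face :: "(real^'n) set" where
  "top_face = {x \<in> P. \<forall>y \<in> P. \<beta> \<bullet> y \<le> \<beta> \<bullet> x}"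

definition lower_unreachable :: "(real^'n) set" where
  "lower_unreachable = {x \<in> P. \<beta> \<bullet> x \<le> \<beta> \<bullet> vm} -
     (F \<union> (if {x. \<beta> \<bullet> x = \<beta> \<bullet> vm} \<inter> {x. drift x = 0} \<inter> F \<noteq> {}
           then {x. \<beta> \<bullet> x = \<beta> \<bullet> vm} \<inter> {x. drift x = 0} else {}))"

definition upper_unreachable :: "(real^'n) set" where
  "upper_unreachable =
     (if top_face \<subseteq> {x. drift x = 0} \<inter> {x \<in> P. \<beta> \<bullet> x > \<beta> \<bullet> vp} then top_face else {})"

lemma trajectory_avoids_lower_unreachable:
  assumes pc: "piecewise_continuous_on T u" and sol: "is_solution A a B u x0 T X"
    and inP: "\<forall>t\<in>{0..T}. X t \<in> P" and end_F: "X T \<in> F" and t: "t \<in> {0..T}"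
  shows "X t \<notin> lower_unreachable"
proof
  assume "X t \<in> lower_unreachable"
  define E where "E = {x. \<beta> \<bullet> x = \<beta> \<bullet> vm} \<inter> {x. drift x = 0}"
  have low: "\<beta> \<bullet> X t \<le> \<beta> \<bullet> vm" and notF: "X t \<notin> F" and notE: "X t \<in> E \<Longrightarrow> E \<inter> F = {}"
    using \<open>X t \<in> lower_unreachable\<close> unfolding lower_unreachable_def E_def[symmetric]
    by (auto split: if_splits)
  have "t < T" using t notF end_F by (cases "t = T") auto
  moreover have vm_T: "\<beta> \<bullet> vm \<le> \<beta> \<bullet> X T" using vm(2) end_F by blast
  then have "\<beta> \<bullet> X t \<le> \<beta> \<bullet> X T" using low by linarith
  ultimately have flat: "drift (X s) = 0 \<and> \<beta> \<bullet> X s = \<beta> \<bullet> X t" if "s \<in> {t..T}" for s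
    using level_flat_if_not_decreasing[OF pc sol inP drift_nonpos t] that by blast
  have "t \<in> {t..T}" "T \<in> {t..T}" using t by auto
  then have "X t \<in> E" "X T \<in> E"
    using flat[of t] flat[of T] low vm_T unfolding E_def by auto
  then show False using notE end_F by blast
qed

lemma trajectory_avoids_upper_unreachable:
  assumes pc: "piecewise_continuous_on T u" and sol: "is_solution A a B u x0 T X"
    and inP: "\<forall>t\<in>{0..T}. X t \<in> P" and end_F: "X T \<in> F" and t: "t \<in> {0..T}"
  shows "X t \<notin> upper_unreachable"
proof
  assume "X t \<in> upper_unreachable"
  then have face: "top_face \<subseteq> {x. drift x = 0} \<inter> {x \<in> P. \<beta> \<bullet> x > \<beta> \<bullet> vp}" and Xt: "X t \<in> top_face"
    unfolding upper_unreachable_def by (auto split: if_splits)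
  have top: "\<forall>y\<in>P. \<beta> \<bullet> y \<le> \<beta> \<bullet> X t" using Xt by (simp add: top_face_def)
  moreover have "\<forall>y\<in>P. \<beta> \<bullet> y = \<beta> \<bullet> X t \<longrightarrow> drift y = 0"
    using face top by (auto simp: top_face_def)
  ultimately have "\<beta> \<bullet> X T = \<beta> \<bullet> X t"
    by (rule level_stays_on_top_face[OF pc sol inP polytope_P drift_nonpos t])
  moreover have "\<beta> \<bullet> X t > \<beta> \<bullet> vp" using face Xt by auto
  moreover have "\<beta> \<bullet> X T \<le> \<beta> \<bullet> vp" using vp(2) end_F by blast
  ultimately show False by linarith
qed

lemma interior_ball: obtains c \<rho> where "\<rho> > 0" "ball c \<rho> \<subseteq> P"
proof -
  obtain c where "c \<in> interior P" using interior_P by blast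
  then show ?thesis using that unfolding mem_interior by blast
qed

lemma drifting_or_below_top:
  assumes x: "x \<in> P" and not_equilibrium_top: "\<not> (x \<in> top_face \<and> top_face \<subseteq> {x. drift x = 0})"
  shows "drifting_level (\<beta> \<bullet> x) \<or> (\<exists>y\<in>P. \<beta> \<bullet> x < \<beta> \<bullet> y)"
proof (cases "x \<in> top_face")
  case True
  then obtain z where z: "z \<in> top_face" "drift z \<noteq> 0" using not_equilibrium_top by auto
  then have "z \<in> P" "drift z < 0" using drift_nonpos by (auto simp: top_face_def order_less_le)
  moreover have "\<beta> \<bullet> z \<le> \<beta> \<bullet> x" "\<beta> \<bullet> x \<le> \<beta> \<bullet> z" using True z(1) x by (auto simp: top_face_def)
  then have "\<beta> \<bullet> z = \<beta> \<bullet> x" by simp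
  ultimately show ?thesis unfolding drifting_level_def by blast
next
  case False
  then show ?thesis using x by (auto simp: top_face_def not_le)
qed

lemma exists_target_below:
  assumes x: "x \<in> P" "\<beta> \<bullet> vm < \<beta> \<bullet> x"
  obtains f where "f \<in> F" "\<beta> \<bullet> f < \<beta> \<bullet> x" "drifting_level (\<beta> \<bullet> f) \<or> (\<exists>y\<in>P. \<beta> \<bullet> y < \<beta> \<bullet> f)"
proof (cases "drifting_level (\<beta> \<bullet> vm) \<or> (\<exists>y\<in>P. \<beta> \<bullet> y < \<beta> \<bullet> vm)")
  case True
  then show ?thesis using that vm(1) x(2) by blast
next
  case False
  show ?thesis
  proof (cases "\<beta> \<bullet> vm < \<beta> \<bullet> vp")
    case True
    \<comment> \<open>A point of \<open>F\<close> strictly between the levels of \<open>vm\<close> and \<open>x\<close>, so that \<open>vm\<close> lies below it.\<close>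
    define s where "s = min (1 / 2) ((\<beta> \<bullet> x - \<beta> \<bullet> vm) / (2 * (\<beta> \<bullet> vp - \<beta> \<bullet> vm)))"
    have s: "0 < s" "s \<le> 1" using True x by (auto simp: s_def)
    define f where "f = (1 - s) *\<^sub>R vm + s *\<^sub>R vp"
    have "f \<in> F" using convex_F vm vp s by (simp add: f_def convexD)
    have lf: "\<beta> \<bullet> f = \<beta> \<bullet> vm + s * (\<beta> \<bullet> vp - \<beta> \<bullet> vm)"
      by (simp add: f_def inner_add_right algebra_simps)
    have "s \<le> (\<beta> \<bullet> x - \<beta> \<bullet> vm) / (2 * (\<beta> \<bullet> vp - \<beta> \<bullet> vm))" by (simp add: s_def)
    then have "2 * (s * (\<beta> \<bullet> vp - \<beta> \<bullet> vm)) \<le> \<beta> \<bullet> x - \<beta> \<bullet> vm"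
      using True by (simp add: le_divide_eq algebra_simps)
    moreover have "0 < s * (\<beta> \<bullet> vp - \<beta> \<bullet> vm)" using s True by simp
    ultimately have "\<beta> \<bullet> f < \<beta> \<bullet> x" "\<beta> \<bullet> vm < \<beta> \<bullet> f" using lf x(2) by linarith+
    moreover have "vm \<in> P" using vm(1) F_subset_P by blast
    ultimately show ?thesis using that[OF \<open>f \<in> F\<close>] by blast
  next
    case False
    have level: "F \<subseteq> {x. \<beta> \<bullet> x = \<beta> \<bullet> vm}"
    proof
      fix y assume "y \<in> F"
      then have "\<beta> \<bullet> vm \<le> \<beta> \<bullet> y" "\<beta> \<bullet> y \<le> \<beta> \<bullet> vp" using vm(2) vp(2) by auto
      then show "y \<in> {x. \<beta> \<bullet> x = \<beta> \<bullet> vm}" using False by simp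
    qed
    then obtain f where f: "f \<in> F" "drift f \<noteq> 0"
      using level_face_has_nonzero_drift[OF _ aff_dim_F level] vm(1) by blast
    then have "f \<in> P" "drift f < 0" using drift_nonpos F_subset_P by (auto simp: order_less_le)
    then have "drifting_level (\<beta> \<bullet> f)" unfolding drifting_level_def by blast
    moreover have "\<beta> \<bullet> f < \<beta> \<bullet> x" using level f(1) x(2) by auto
    ultimately show ?thesis using that[OF f(1)] by blast
  qed
qed

lemma reaches_if_not_unreachable:
  assumes x: "x \<in> P" "x \<notin> lower_unreachable \<union> upper_unreachable"
  shows "reaches A a B P x F"
proof -
  have reaches_F: "reaches A a B P x F" if "reaches A a B P x {f}" "f \<in> F" for f
    using that reaches_trans reaches_refl[of f P F] F_subset_P by blast
  consider "x \<in> F" | "x \<notin> F" "\<beta> \<bullet> x \<le> \<beta> \<bullet> vm" | "\<beta> \<bullet> vm < \<beta> \<bullet> x" "x \<in> top_face"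
      "top_face \<subseteq> {x. drift x = 0}" | "\<beta> \<bullet> vm < \<beta> \<bullet> x" "\<not> (x \<in> top_face \<and> top_face \<subseteq> {x. drift x = 0})"
    by (meson not_le)
  then show ?thesis
  proof cases
    case 1
    then show ?thesis using reaches_refl x(1) by blast
  next
    case 2
    \<comment> \<open>\<open>x\<close> is not in \<open>\<A>\<^sup>-\<close>, so it is an equilibrium on the level of \<open>vm\<close>, as is some point of \<open>F\<close>.\<close>
    then obtain f where f: "f \<in> F" "\<beta> \<bullet> f = \<beta> \<bullet> vm" "drift f = 0" and "\<beta> \<bullet> x = \<beta> \<bullet> vm" "drift x = 0"
      using x unfolding lower_unreachable_def by (auto split: if_splits)
    moreover have "f \<in> P" using f(1) F_subset_P by blast
    ultimately have "reaches A a B P x {f}" using reaches_within_level[OF x(1)] by simp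
    then show ?thesis using reaches_F f(1) by blast
  next
    case 3
    \<comment> \<open>\<open>x\<close> is not in \<open>\<A>\<^sup>+\<close>, so \<open>vp\<close> lies on the top face, which consists of equilibria.\<close>
    then have "\<not> top_face \<subseteq> {x. drift x = 0} \<inter> {x \<in> P. \<beta> \<bullet> x > \<beta> \<bullet> vp}"
      using x(2) unfolding upper_unreachable_def by auto
    then obtain y where "y \<in> top_face" "y \<notin> {x \<in> P. \<beta> \<bullet> x > \<beta> \<bullet> vp}" using 3(3) by blast
    then have "\<beta> \<bullet> x \<le> \<beta> \<bullet> y" "\<beta> \<bullet> y \<le> \<beta> \<bullet> vp" using x(1) by (auto simp: top_face_def)
    moreover have vpP: "vp \<in> P" using vp(1) F_subset_P by blast
    then have "\<beta> \<bullet> vp \<le> \<beta> \<bullet> x" using 3(2) by (simp add: top_face_def)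
    ultimately have level: "\<beta> \<bullet> x = \<beta> \<bullet> vp" by linarith
    then have "vp \<in> top_face" using 3(2) vpP by (simp add: top_face_def)
    then have "drift vp = 0" "drift x = 0" using 3(2,3) by auto
    then have "reaches A a B P x {vp}" using reaches_within_level[OF x(1) vpP] level by simp
    then show ?thesis using reaches_F vp(1) by blast
  next
    case 4
    obtain f where f: "f \<in> F" "\<beta> \<bullet> f < \<beta> \<bullet> x" "drifting_level (\<beta> \<bullet> f) \<or> (\<exists>y\<in>P. \<beta> \<bullet> y < \<beta> \<bullet> f)"
      using exists_target_below[OF x(1) 4(1)] .
    obtain c \<rho> where "\<rho> > 0" "ball c \<rho> \<subseteq> P" by (rule interior_ball)
    moreover have "f \<in> P" using f(1) F_subset_P by blast
    ultimately have "reaches A a B P x {f}"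
      using reaches_down[OF x(1) _ f(2)] drifting_or_below_top[OF x(1) 4(2)] f(3) by blast
    then show ?thesis using reaches_F f(1) by blast
  qed
qed

lemma trajectory_avoids_unreachable:
  assumes "piecewise_continuous_on T u" "is_solution A a B u x0 T X" "\<forall>t\<in>{0..T}. X t \<in> P"
    "X T \<in> F" "t \<in> {0..T}"
  shows "X t \<in> P - (lower_unreachable \<union> upper_unreachable)"
  using trajectory_avoids_lower_unreachable[OF assms] trajectory_avoids_upper_unreachable[OF assms]
    assms(3,5) by blast

lemma reaches_imp_not_unreachable:
  assumes "reaches A a B P x F"
  shows "x \<in> P - (lower_unreachable \<union> upper_unreachable)"
proof -
  obtain u T X where T: "T \<ge> 0" "piecewise_continuous_on T u" "is_solution A a B u x T X"
    "X T \<in> F" "\<forall>t\<in>{0..T}. X t \<in> P"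
    using assms unfolding reaches_def by blast
  then have "X 0 = x" unfolding is_solution_def by auto
  then show ?thesis using trajectory_avoids_unreachable[OF T(2,3,5,4), of 0] T(1) by simp
qed

theorem reach_characterization:
  "Reach A a B P F = P - (lower_unreachable \<union> upper_unreachable) \<and>
   (\<forall>x \<in> Reach A a B P F. reaches A a B (Reach A a B P F) x F) \<and>
   (\<forall>x \<in> lower_unreachable \<union> upper_unreachable. \<not> reaches A a B P x F)"
proof (intro conjI ballI)
  show Reach: "Reach A a B P F = P - (lower_unreachable \<union> upper_unreachable)"
    unfolding Reach_def using reaches_imp_not_unreachable reaches_if_not_unreachable by auto
  fix x assume "x \<in> Reach A a B P F"
  then obtain u T X where T: "T \<ge> 0" "piecewise_continuous_on T u" "is_solution A a B u x T X"
    "X T \<in> F" "\<forall>t\<in>{0..T}. X t \<in> P"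
    unfolding Reach_def reaches_def by blast
  have "\<forall>t\<in>{0..T}. X t \<in> Reach A a B P F"
    unfolding Reach using trajectory_avoids_unreachable[OF T(2,3,5,4)] by blast
  then show "reaches A a B (Reach A a B P F) x F" unfolding reaches_def using T(1-4) by blast
next
  fix x assume "x \<in> lower_unreachable \<union> upper_unreachable"
  then show "\<not> reaches A a B P x F" using reaches_imp_not_unreachable by blast
qed

end

theorem corollary1:
  fixes A :: "real^'n^'n" and a :: "real^'n" and B :: "real^'m^'n"
    and P F :: "(real^'n) set" and \<beta> vm vp :: "real^'n"
  defines "Bim \<equiv> range (\<lambda>u. B *v u)"
      and "Obs \<equiv> {x. A *v x + a \<in> range (\<lambda>u. B *v u)}"
  assumes P_poly: "polytope P" and P_dim: "aff_dim P = int CARD('n)"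
      and A1: "rank B = CARD('n) - 1"
      and A2: "controllable A B"
      and A3: "interior P \<inter> Obs = {}"
      and A4: "polytope F" "aff_dim F = int CARD('n) - 1" "F \<subseteq> frontier P"
      and beta_unit: "norm \<beta> = 1"
      and beta_normal: "\<forall>y \<in> Bim. \<beta> \<bullet> y = 0"
      and beta_sign: "\<forall>x \<in> P. \<beta> \<bullet> (A *v x + a) \<le> 0"
      and vm: "vm \<in> F" "\<forall>x \<in> F. \<beta> \<bullet> vm \<le> \<beta> \<bullet> x"
      and vp: "vp \<in> F" "\<forall>x \<in> F. \<beta> \<bullet> x \<le> \<beta> \<bullet> vp"
  shows "let Hm = {x \<in> P. \<beta> \<bullet> x \<le> \<beta> \<bullet> vm};
             Pp = {x \<in> P. \<forall>y \<in> P. \<beta> \<bullet> y \<le> \<beta> \<bullet> x};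
             Bvm = {x. \<beta> \<bullet> x = \<beta> \<bullet> vm};
             Bm = (if Bvm \<inter> Obs \<inter> F \<noteq> {} then Bvm \<inter> Obs else {});
             Am = Hm - (F \<union> Bm);
             Ap = (if Pp \<subseteq> Obs \<inter> {x \<in> P. \<beta> \<bullet> x > \<beta> \<bullet> vp} then Pp else {});
             AA = Am \<union> Ap;
             R = Reach A a B P F
         in R = P - AA
            \<and> (\<forall>x \<in> R. reaches A a B R x F)
            \<and> (\<forall>x \<in> AA. \<not> reaches A a B P x F)"
proof -
  have \<beta>: "\<beta> \<noteq> 0" using beta_unit by auto
  have B_normal: "\<And>u. \<beta> \<bullet> (B *v u) = 0" using beta_normal unfolding Bim_def by auto
  have range_B_eq: "range (\<lambda>u. B *v u) = {y. \<beta> \<bullet> y = 0}"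
    by (rule range_eq_hyperplane_if_rank[OF A1 B_normal \<beta>])
  obtain e where e: "\<beta> \<bullet> e = 0" "\<beta> \<bullet> (A *v e) = 1"
    using controllable_transversal[OF A2 B_normal \<beta>] .
  have interior: "interior P \<noteq> {}"
    using P_dim rel_interior_eq_empty[OF polytope_imp_convex[OF P_poly]] interior_rel_interior[of P]
    by auto
  have F_P: "F \<subseteq> P"
    using A4(3) frontier_subset_closed[OF polytope_imp_closed[OF P_poly]] by blast
  interpret beta_normal_system A a B \<beta> using B_normal by unfold_locales
  have range_B: "\<exists>u. B *v u = y" if "\<beta> \<bullet> y = 0" for y
    using that range_B_eq by (metis (mono_tags, lifting) mem_Collect_eq rangeE)
  interpret reach_problem A a B \<beta> P e F vm vp
    using range_B e interior F_P beta_sign P_poly polytope_imp_convex[OF P_poly]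
      polytope_imp_convex[OF A4(1)] A4(2) vm vp
    by unfold_locales (auto simp: drift_def)
  have "A *v x + a \<in> range (\<lambda>u. B *v u) \<longleftrightarrow> drift x = 0" for x
    by (simp only: range_B_eq drift_def mem_Collect_eq)
  then have Obs: "Obs = {x. drift x = 0}" unfolding Obs_def by blast
  show ?thesis
    unfolding Let_def Obs
    using reach_characterization[unfolded lower_unreachable_def upper_unreachable_def top_face_def] .
qed

end
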